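(* Let $S\in\mathrm{Sp}(2n,\mathbb R)$ with largest singular value $e^{s}$, let $\bm f\in\mathbb Z_{\ge0}^n$ with $f_{\max}=\max_if_i$, and let $M=S\,\mathrm{diag}(D,D)\,S^T$ where $D=\mathrm{diag}(\tfrac12+f_1,\dots,\tfrac12+f_n)$. Let $0\le\varepsilon<1/4$ and let $F$ be a real symmetric matrix with $\|F\|\le1$ such that $M'=M+\varepsilon F$ is a valid covariance matrix. If $R'\in\mathrm{Sp}(2n,\mathbb R)$ satisfies $M'=R'\,\mathrm{diag}(D',D')\,R'^T$ for a diagonal matrix $D'$ with positive entries, then $$\min_{O\in\mathrm{Sp}(2n,\mathbb R)\cap\mathrm O(2n)}\|R'^{-1}S-O\|\le 24\,\varepsilon^{1/8}e^{21s/4}n^{3/2}(1+f_{\max})^{3/2}.$$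
   Context: $\mathrm{Sp}(2n,\mathbb R)=\{S\in\mathbb R^{2n\times2n}: S\Omega S^T=\Omega\}$ with $\Omega=\begin{pmatrix}0&I\\-I&0\end{pmatrix}$; $\mathrm O(2n)$ is the real orthogonal group. A valid covariance matrix is a real symmetric positive-definite $2n\times 2n$ matrix all of whose symplectic eigenvalues are $\ge 1/2$ (the symplectic eigenvalues of $M$ are the $\nu_i>0$ with $M=R\,\mathrm{diag}(\nu,\nu)R^T$ for some $R\in\mathrm{Sp}(2n,\mathbb R)$, by Williamson's theorem). $\|\cdot\|$ is the operator norm. *)

theory Defs
  imports "HOL-Analysis.Analysis"
begin

text \<open>Real 2n x 2n matrices are indexed by the sum type 'n + 'n, where CARD('n) = n:
  the first block of coordinates is Inl i (i.e. x_i), the second is Inr i (i.e. p_i).\<close>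

definition Omega :: "real^('n::finite + 'n)^('n + 'n)" where
  "Omega = (\<chi> i j. (case (i, j) of
       (Inl a, Inr b) \<Rightarrow> (if a = b then 1 else 0)
     | (Inr a, Inl b) \<Rightarrow> (if a = b then -1 else 0)
     | _ \<Rightarrow> 0))"

definition symplectic :: "real^('n::finite + 'n)^('n + 'n) \<Rightarrow> bool" where
  "symplectic S \<longleftrightarrow> S ** Omega ** transpose S = Omega"

definition diag2 :: "real^('n::finite) \<Rightarrow> real^('n + 'n)^('n + 'n)" where
  "diag2 d = (\<chi> i j. if i = j then (case i of Inl a \<Rightarrow> d $ a | Inr a \<Rightarrow> d $ a) else 0)"

definition opnorm :: "real^'m^'k \<Rightarrow> real" where
  "opnorm A = onorm (\<lambda>x. A *v x)"

definition symmetric_mat :: "real^'m^'m \<Rightarrow> bool" where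
  "symmetric_mat A \<longleftrightarrow> transpose A = A"

definition posdef_mat :: "real^'m^'m \<Rightarrow> bool" where
  "posdef_mat A \<longleftrightarrow> (\<forall>x. x \<noteq> 0 \<longrightarrow> x \<bullet> (A *v x) > 0)"

definition symplectic_eigenvalues :: "real^('n::finite + 'n)^('n + 'n) \<Rightarrow> real set" where
  "symplectic_eigenvalues M = {\<nu> $ i | \<nu> i. \<exists>R. symplectic R \<and> (\<forall>k. \<nu> $ k > 0) \<and>
       M = R ** diag2 \<nu> ** transpose R}"

definition valid_cov :: "real^('n::finite + 'n)^('n + 'n) \<Rightarrow> bool" where
  "valid_cov M \<longleftrightarrow> symmetric_mat M \<and> posdef_mat M \<and>
     (\<forall>v \<in> symplectic_eigenvalues M. v \<ge> 1/2)"

end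

theory Submission
  imports Defs
begin

text \<open>Put T = R'^(-1) S. It is symplectic and diag(D', D') = T diag(k, k) T^T + \<epsilon> G with
  k = 1/2 + f and G small. Because T^T \<Omega> T = \<Omega>, this makes T an approximate intertwiner of
  diag(k, k)^2 and diag(D', D')^2. Rows of a symplectic matrix cannot be short, so every D'_a lies
  near some k_b, and since squares of distinct half-integers differ by at least 2, T is up to
  O(\<epsilon>) block diagonal with respect to the eigenspaces of k; such a block diagonal matrix
  almost commutes with \<Omega>. Finally, a symplectic matrix almost commuting with \<Omega> is close to an
  orthogonal symplectic one: average it with \<Omega> T \<Omega>^(-1) and multiply by the inverse square root
  of the resulting near-isometry. When \<epsilon> is not small compared with the other parameters, the
  identity already satisfies the bound.\<close>

lemma matrix_add_rdistrib: "((A::'a::ring_1^'n^'m) + B) ** C = A ** C + B ** C"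
  by (vector matrix_matrix_mult_def sum.distrib[symmetric] algebra_simps)

lemma matrix_diff_ldistrib: "(A::'a::ring_1^'n^'m) ** (B - C) = A ** B - A ** C"
  by (vector matrix_matrix_mult_def sum_subtractf[symmetric] algebra_simps)

lemma matrix_diff_rdistrib: "((A::'a::ring_1^'n^'m) - B) ** C = A ** C - B ** C"
  by (vector matrix_matrix_mult_def sum_subtractf[symmetric] algebra_simps)

lemma matrix_neg_left: "(- (A::'a::ring_1^'n^'m)) ** B = - (A ** B)"
  by (vector matrix_matrix_mult_def sum_negf[symmetric])

lemma matrix_neg_right: "(A::'a::ring_1^'n^'m) ** (- B) = - (A ** B)"
  by (vector matrix_matrix_mult_def sum_negf[symmetric])

lemma matrix_scaleR_left: "(c *\<^sub>R (A::real^'n^'m)) ** B = c *\<^sub>R (A ** B)"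
  by (simp add: scalar_matrix_assoc)

lemma matrix_scaleR_right: "(A::real^'n^'m) ** (c *\<^sub>R B) = c *\<^sub>R (A ** B)"
  by (simp add: matrix_scalar_ac scalar_matrix_assoc)

lemmas matrix_algebra_simps = matrix_add_ldistrib matrix_add_rdistrib matrix_diff_ldistrib
  matrix_diff_rdistrib matrix_neg_left matrix_neg_right matrix_scaleR_left matrix_scaleR_right
  matrix_mul_assoc

lemma transpose_add: "transpose ((A::'a::semiring_1^'n^'m) + B) = transpose A + transpose B"
  by (simp add: transpose_def vec_eq_iff)

lemma transpose_diff: "transpose ((A::'a::ring_1^'n^'m) - B) = transpose A - transpose B"
  by (simp add: transpose_def vec_eq_iff)

lemma transpose_neg: "transpose (- (A::'a::ring_1^'n^'m)) = - transpose A"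
  by (simp add: transpose_def vec_eq_iff)

lemma transpose_zero [simp]: "transpose (0::'a::semiring_1^'n^'m) = 0"
  by (simp add: transpose_def vec_eq_iff)

lemma bounded_linear_transpose: "bounded_linear (transpose :: real^'n^'m \<Rightarrow> real^'m^'n)"
  by (rule linear_conv_bounded_linear[THEN iffD1], rule linearI)
    (simp_all add: transpose_add transpose_scalar)

lemma bounded_linear_matrix_mult_left: "bounded_linear (\<lambda>Y::real^'n^'m. (A::real^'m^'k) ** Y)"
  by (rule linear_conv_bounded_linear[THEN iffD1], rule linearI)
    (simp_all add: matrix_add_ldistrib matrix_scaleR_right)

lemma bounded_linear_matrix_mult_right: "bounded_linear (\<lambda>Y::real^'n^'m. Y ** (A::real^'k^'n))"
  by (rule linear_conv_bounded_linear[THEN iffD1], rule linearI)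
    (simp_all add: matrix_add_rdistrib matrix_scaleR_left)

lemma column_matrix_mult: "column j ((A::real^'n^'m) ** B) = A *v column j B"
  by (simp add: column_def matrix_matrix_mult_def matrix_vector_mult_def vec_eq_iff)

lemma matrix_inv_eqI: assumes "(A::real^'n^'n) ** B = mat 1" shows "matrix_inv A = B"
proof -
  have "B ** A = mat 1" using assms matrix_left_right_inverse by blast
  then have "A ** matrix_inv A = mat 1 \<and> matrix_inv A ** A = mat 1"
    unfolding matrix_inv_def using assms
    by (intro someI_ex[of "\<lambda>A'. A ** A' = mat 1 \<and> A' ** A = mat 1"]) blast
  then have "matrix_inv A = matrix_inv A ** (A ** B)" using assms by simp
  also have "\<dots> = B" using \<open>A ** matrix_inv A = mat 1 \<and> _\<close> by (simp add: matrix_mul_assoc)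
  finally show ?thesis .
qed

section \<open>Operator norm and Frobenius norm\<close>

lemma opnorm_mult_vec_le: "norm (A *v x) \<le> opnorm A * norm x"
  unfolding opnorm_def by (rule onorm[OF matrix_vector_mul_bounded_linear])

lemma opnorm_nonneg: "0 \<le> opnorm A"
  unfolding opnorm_def by (rule onorm_pos_le[OF matrix_vector_mul_bounded_linear])

lemma opnorm_leI: "(\<And>x. norm (A *v x) \<le> b * norm x) \<Longrightarrow> opnorm A \<le> b"
  unfolding opnorm_def by (rule onorm_le)

lemma opnorm_mult_le: "opnorm ((A::real^'n^'m) ** B) \<le> opnorm A * opnorm B"
proof (rule opnorm_leI)
  fix x
  have "norm ((A ** B) *v x) = norm (A *v (B *v x))" by (simp add: matrix_vector_mul_assoc)
  also have "\<dots> \<le> opnorm A * norm (B *v x)" by (rule opnorm_mult_vec_le)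
  also have "\<dots> \<le> opnorm A * (opnorm B * norm x)"
    by (rule mult_left_mono[OF opnorm_mult_vec_le opnorm_nonneg])
  finally show "norm ((A ** B) *v x) \<le> opnorm A * opnorm B * norm x" by (simp add: mult.assoc)
qed

lemma opnorm_add_le: "opnorm ((A::real^'n^'m) + B) \<le> opnorm A + opnorm B"
proof (rule opnorm_leI)
  fix x
  have "norm ((A + B) *v x) \<le> norm (A *v x) + norm (B *v x)"
    by (simp add: matrix_vector_mult_add_rdistrib norm_triangle_ineq)
  also have "\<dots> \<le> opnorm A * norm x + opnorm B * norm x" by (intro add_mono opnorm_mult_vec_le)
  finally show "norm ((A + B) *v x) \<le> (opnorm A + opnorm B) * norm x" by (simp add: algebra_simps)
qed

lemma opnorm_scaleR: "opnorm (c *\<^sub>R (A::real^'n^'m)) = \<bar>c\<bar> * opnorm A"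
proof -
  have "(*v) (c *\<^sub>R A) = (\<lambda>x. c *\<^sub>R (A *v x))"
    by (rule ext) (simp add: matrix_vector_mult_def vec_eq_iff sum_distrib_left mult.assoc)
  then show ?thesis
    unfolding opnorm_def using onorm_scaleR[OF matrix_vector_mul_bounded_linear] by simp
qed

lemma opnorm_uminus: "opnorm (- (A::real^'n^'m)) = opnorm A"
  using opnorm_scaleR[of "-1" A] by simp

lemma opnorm_diff_le: "opnorm ((A::real^'n^'m) - B) \<le> opnorm A + opnorm B"
  using opnorm_add_le[of A "- B"] by (simp add: opnorm_uminus)

lemma opnorm_transpose_le: "opnorm (transpose (A::real^'n^'m)) \<le> opnorm A"
proof (rule opnorm_leI)
  fix x :: "real^'m"
  let ?y = "transpose A *v x"
  have "norm ?y ^ 2 = inner (x v* A) ?y" by (simp add: power2_norm_eq_inner)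
  also have "\<dots> = inner x (A *v ?y)" by (rule dot_lmul_matrix)
  also have "\<dots> \<le> norm x * norm (A *v ?y)" by (rule norm_cauchy_schwarz)
  also have "\<dots> \<le> norm x * (opnorm A * norm ?y)"
    by (rule mult_left_mono[OF opnorm_mult_vec_le norm_ge_zero])
  finally have "norm ?y * norm ?y \<le> (opnorm A * norm x) * norm ?y"
    by (simp add: power2_eq_square algebra_simps)
  then show "norm ?y \<le> opnorm A * norm x"
    using opnorm_nonneg[of A] by (cases "norm ?y = 0") (simp_all add: mult_le_cancel_right)
qed

lemma opnorm_transpose: "opnorm (transpose (A::real^'n^'m)) = opnorm A"
  using opnorm_transpose_le[of A] opnorm_transpose_le[of "transpose A"] by simp

lemma opnorm_mat_1: "opnorm (mat 1 :: real^'n^'n) = 1"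
  by (simp add: opnorm_def onorm_id)

lemma norm_orthogonal_matrix_mult_vec:
  assumes "orthogonal_matrix (Q::real^'n^'n)" shows "norm (Q *v x) = norm x"
  using assms orthogonal_transformation_matrix[of "(*v) Q"] by (simp add: orthogonal_transformation)

lemma opnorm_orthogonal_matrix_le:
  assumes "orthogonal_matrix (Q::real^'n^'n)" shows "opnorm Q \<le> 1"
  by (rule opnorm_leI) (simp add: norm_orthogonal_matrix_mult_vec[OF assms])

lemma opnorm_mult_le_mult:
  "opnorm A \<le> a \<Longrightarrow> opnorm B \<le> b \<Longrightarrow> opnorm ((A::real^'n^'m) ** B) \<le> a * b"
  by (rule order_trans[OF opnorm_mult_le mult_mono])
    (auto intro: opnorm_nonneg order_trans[OF opnorm_nonneg])

lemma norm_vec_power2: "norm (x::real^'n) ^ 2 = (\<Sum>i\<in>UNIV. (x $ i)^2)"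
  unfolding power2_norm_eq_inner by (simp add: inner_vec_def power2_eq_square)

lemma norm_matrix_power2: "norm (A::real^'n^'m) ^ 2 = (\<Sum>i\<in>UNIV. \<Sum>j\<in>UNIV. (A $ i $ j)^2)"
  unfolding power2_norm_eq_inner by (simp add: inner_vec_def power2_eq_square)

lemma norm_transpose: "norm (transpose (A::real^'n^'m)) = norm A"
proof -
  have "norm (transpose A) ^ 2 = norm A ^ 2"
    unfolding norm_matrix_power2 by (simp add: transpose_def) (rule sum.swap)
  then show ?thesis by (simp add: power2_eq_iff_nonneg)
qed

lemma norm_matrix_power2_columns: "norm (A::real^'n^'m) ^ 2 = (\<Sum>j\<in>UNIV. norm (column j A) ^ 2)"
proof -
  have "norm A ^ 2 = norm (transpose A) ^ 2" by (simp add: norm_transpose)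
  then show ?thesis by (simp add: power2_norm_eq_inner inner_vec_def transpose_def column_def)
qed

lemma norm_matrix_le_entrywise:
  assumes "\<And>i j. \<bar>(A::real^'n^'m) $ i $ j\<bar> \<le> \<bar>B $ i $ j\<bar>" shows "norm A \<le> norm B"
proof -
  have "norm A ^ 2 \<le> norm B ^ 2"
    unfolding norm_matrix_power2 by (intro sum_mono) (use assms in \<open>simp add: abs_le_square_iff\<close>)
  then show ?thesis by (simp add: power2_le_iff_abs_le)
qed

lemma norm_matrix_mult_le_left: "norm ((A::real^'n^'m) ** B) \<le> opnorm A * norm B"
proof -
  have "norm (A ** B) ^ 2 = (\<Sum>j\<in>UNIV. norm (A *v column j B) ^ 2)"
    by (simp add: norm_matrix_power2_columns column_matrix_mult)
  also have "\<dots> \<le> (\<Sum>j\<in>UNIV. (opnorm A * norm (column j B)) ^ 2)"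
    by (intro sum_mono power_mono opnorm_mult_vec_le norm_ge_zero)
  also have "\<dots> = (opnorm A * norm B) ^ 2"
    by (simp add: norm_matrix_power2_columns[of B] power_mult_distrib sum_distrib_left)
  finally show ?thesis using opnorm_nonneg[of A] by (simp add: power2_le_iff_abs_le)
qed

lemma norm_matrix_mult_le_right: "norm ((A::real^'n^'m) ** B) \<le> norm A * opnorm B"
  using norm_matrix_mult_le_left[of "transpose B" "transpose A"]
  by (simp add: matrix_transpose_mul[symmetric] norm_transpose opnorm_transpose mult.commute)

lemma opnorm_le_norm: "opnorm (A::real^'n^'m) \<le> norm A"
proof (rule opnorm_leI)
  fix x :: "real^'n"
  have "norm (A *v x) ^ 2 = (\<Sum>i\<in>UNIV. (inner (A $ i) x)^2)"
    by (simp add: norm_vec_power2 matrix_vector_mul_component)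
  also have "\<dots> \<le> (\<Sum>i\<in>UNIV. norm (A $ i) ^ 2 * norm x ^ 2)"
  proof (intro sum_mono)
    fix i
    have "\<bar>inner (A $ i) x\<bar> \<le> \<bar>norm (A $ i) * norm x\<bar>"
      using Cauchy_Schwarz_ineq2[of "A $ i" x] by simp
    then show "(inner (A $ i) x)^2 \<le> norm (A $ i) ^ 2 * norm x ^ 2"
      by (simp only: abs_le_square_iff power_mult_distrib)
  qed
  also have "\<dots> = norm A ^ 2 * norm x ^ 2"
    by (simp add: sum_distrib_right power2_norm_eq_inner inner_vec_def)
  finally have "norm (A *v x) ^ 2 \<le> (norm A * norm x) ^ 2" by (simp add: power_mult_distrib)
  then show "norm (A *v x) \<le> norm A * norm x" by (simp add: power2_le_iff_abs_le)
qed

lemma norm_matrix_mult_le: "norm ((A::real^'n^'m) ** B) \<le> norm A * norm B"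
  by (meson norm_matrix_mult_le_left opnorm_le_norm mult_right_mono norm_ge_zero order_trans)

lemma norm_le_sqrt_card_opnorm: "norm (A::real^'n^'m) \<le> sqrt (real CARD('n)) * opnorm A"
proof -
  have col: "norm (column j A) \<le> opnorm A" for j
    using norm_column_le_onorm[of j A] by (simp add: opnorm_def)
  have "norm A ^ 2 \<le> (\<Sum>j\<in>(UNIV::'n set). opnorm A ^ 2)"
    unfolding norm_matrix_power2_columns by (intro sum_mono power_mono col norm_ge_zero)
  also have "\<dots> = (sqrt (real CARD('n)) * opnorm A) ^ 2" by (simp add: power_mult_distrib)
  finally show ?thesis using opnorm_nonneg[of A] by (simp add: power2_le_iff_abs_le)
qed

lemma one_le_sqrt_card: "1 \<le> sqrt (real CARD('a::finite))"
proof -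
  have "0 < CARD('a)" by (rule finite_UNIV_card_ge_0) simp
  then show ?thesis by simp
qed

lemma norm_row_le_opnorm: "norm ((A::real^'n^'m) $ i) \<le> opnorm A"
proof -
  have "A $ i = transpose A *v axis i 1"
    by (simp add: vec_eq_iff matrix_vector_mult_def transpose_def axis_def if_distrib if_distribR
        cong: if_cong)
  then show ?thesis
    using opnorm_mult_vec_le[of "transpose A" "axis i 1"] by (simp add: opnorm_transpose)
qed

section \<open>Block diagonal matrices and \<Omega>\<close>

definition mode :: "'n + 'n \<Rightarrow> 'n" where
  "mode = case_sum id id"

lemma mode_simps [simp]: "mode (Inl a) = a" "mode (Inr a) = a"
  by (simp_all add: mode_def)

lemma sum_UNIV_sum_type:
  "(\<Sum>k\<in>(UNIV::('n::finite + 'n) set). g k) = (\<Sum>a\<in>UNIV. g (Inl a)) + (\<Sum>a\<in>UNIV. g (Inr a))"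
  by (simp add: UNIV_Plus_UNIV[symmetric] sum.Plus del: UNIV_Plus_UNIV)

lemma all_sum_type: "(\<forall>i::'a + 'b. P i) \<longleftrightarrow> (\<forall>a. P (Inl a)) \<and> (\<forall>a. P (Inr a))"
  by (metis sum.exhaust)

lemma diag2_entry: "diag2 d $ i $ j = (if i = j then d $ mode i else 0)"
  by (cases i; cases j) (simp_all add: diag2_def)

lemma diag2_mult_left_entry:
  "(diag2 d ** (A::real^'m^('n::finite + 'n))) $ i $ j = d $ mode i * A $ i $ j"
  by (simp add: matrix_matrix_mult_def diag2_entry if_distrib if_distribR sum.delta cong: if_cong)

lemma diag2_mult_right_entry:
  "((A::real^('n::finite + 'n)^'m) ** diag2 d) $ i $ j = A $ i $ j * d $ mode j"
  by (simp add: matrix_matrix_mult_def diag2_entry if_distrib if_distribR sum.delta' cong: if_cong)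

lemma diag2_mult_vec: "diag2 d *v (x::real^('n::finite + 'n)) = (\<chi> i. d $ mode i * x $ i)"
  by (simp add: matrix_vector_mult_def diag2_entry if_distrib if_distribR sum.delta cong: if_cong)

lemma diag2_diff: "diag2 d - diag2 e = diag2 (d - e)"
  by (simp add: vec_eq_iff diag2_entry)

lemma opnorm_diag2_le:
  fixes d :: "real^'n::finite"
  assumes "\<And>a. \<bar>d $ a\<bar> \<le> b" shows "opnorm (diag2 d) \<le> b"
proof (rule opnorm_leI)
  fix x :: "real^('n + 'n)"
  have b: "0 \<le> b" using assms[of undefined] by simp
  have "norm (diag2 d *v x) ^ 2 = (\<Sum>i\<in>UNIV. (d $ mode i * x $ i)^2)"
    by (simp add: diag2_mult_vec norm_vec_power2)
  also have "\<dots> \<le> (\<Sum>i\<in>UNIV. b^2 * (x $ i)^2)"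
  proof (intro sum_mono)
    fix i
    have "(d $ mode i)^2 \<le> b^2"
      using assms[of "mode i"] b by (simp add: abs_le_square_iff[symmetric])
    then show "(d $ mode i * x $ i)^2 \<le> b^2 * (x $ i)^2"
      by (simp add: power_mult_distrib mult_right_mono)
  qed
  also have "\<dots> = (b * norm x)^2" by (simp add: norm_vec_power2 sum_distrib_left power_mult_distrib)
  finally show "norm (diag2 d *v x) \<le> b * norm x" using b by (simp add: power2_le_iff_abs_le)
qed

lemma Omega_entry:
  "(Omega :: real^('n::finite + 'n)^('n + 'n)) $ i $ j =
    (case (i, j) of (Inl a, Inr b) \<Rightarrow> (if a = b then 1 else 0)
     | (Inr a, Inl b) \<Rightarrow> (if a = b then -1 else 0) | _ \<Rightarrow> 0)"
  by (simp add: Omega_def)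

lemma Omega_mult_entries:
  "((Omega :: real^('n::finite + 'n)^('n + 'n)) ** A) $ Inl a $ j = A $ Inr a $ j"
  "((Omega :: real^('n::finite + 'n)^('n + 'n)) ** A) $ Inr a $ j = - A $ Inl a $ j"
  "(B ** (Omega :: real^('n::finite + 'n)^('n + 'n))) $ i $ Inl b = - B $ i $ Inr b"
  "(B ** (Omega :: real^('n::finite + 'n)^('n + 'n))) $ i $ Inr b = B $ i $ Inl b"
  by (simp_all add: matrix_matrix_mult_def sum_UNIV_sum_type Omega_def if_distrib if_distribR
      sum.delta sum.delta' cong: if_cong)

lemma Omega_squared [simp]: "(Omega :: real^('n::finite + 'n)^('n + 'n)) ** Omega = - mat 1"
  unfolding vec_eq_iff all_sum_type by (simp add: Omega_mult_entries Omega_entry mat_def)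

lemma Omega_Omega_mult_left [simp]:
  "(Omega :: real^('n::finite + 'n)^('n + 'n)) ** (Omega ** A) = - A"
  by (simp add: matrix_mul_assoc matrix_neg_left)

lemma Omega_Omega_mult_right [simp]:
  "(A ** Omega) ** (Omega :: real^('n::finite + 'n)^('n + 'n)) = - A"
  by (simp add: matrix_mul_assoc[symmetric] matrix_neg_right)

lemma transpose_Omega: "transpose (Omega :: real^('n::finite + 'n)^('n + 'n)) = - Omega"
  unfolding vec_eq_iff all_sum_type by (simp add: transpose_def Omega_entry)

lemma orthogonal_matrix_Omega: "orthogonal_matrix (Omega :: real^('n::finite + 'n)^('n + 'n))"
  by (simp add: orthogonal_matrix transpose_Omega matrix_neg_left)

lemma opnorm_Omega_le: "opnorm (Omega :: real^('n::finite + 'n)^('n + 'n)) \<le> 1"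
  by (rule opnorm_orthogonal_matrix_le[OF orthogonal_matrix_Omega])

lemma norm_Omega_mult_left: "norm ((Omega :: real^('n::finite + 'n)^('n + 'n)) ** A) \<le> norm A"
  by (metis norm_matrix_mult_le_left opnorm_Omega_le mult_right_mono norm_ge_zero mult_1
      order_trans)

lemma norm_Omega_mult_right: "norm (A ** (Omega :: real^('n::finite + 'n)^('n + 'n))) \<le> norm A"
  by (metis norm_matrix_mult_le_right opnorm_Omega_le mult_left_mono norm_ge_zero mult_1_right
      order_trans)

lemma diag2_Omega_commute:
  "diag2 d ** (Omega :: real^('n::finite + 'n)^('n + 'n)) = Omega ** diag2 d"
  unfolding vec_eq_iff all_sum_type
  by (simp add: Omega_mult_entries diag2_mult_left_entry diag2_mult_right_entry diag2_entry
      Omega_entry)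

section \<open>The symplectic group\<close>

lemma symplectic_mat_1: "symplectic (mat 1 :: real^('n::finite + 'n)^('n + 'n))"
  by (simp add: symplectic_def)

lemma symplectic_Omega: "symplectic (Omega :: real^('n::finite + 'n)^('n + 'n))"
  by (simp add: symplectic_def transpose_Omega matrix_neg_right matrix_neg_left)

lemma symplectic_mult:
  assumes "symplectic A" "symplectic B" shows "symplectic (A ** B)"
proof -
  have "A ** B ** Omega ** transpose (A ** B) = A ** (B ** Omega ** transpose B) ** transpose A"
    by (simp add: matrix_transpose_mul matrix_mul_assoc)
  then show ?thesis using assms by (simp add: symplectic_def)
qed

lemma symplectic_uminus: "symplectic S \<Longrightarrow> symplectic (- S)"
  by (simp add: symplectic_def transpose_neg matrix_neg_left matrix_neg_right)

lemma symplectic_mult_Omega_inverse: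
  assumes "symplectic S" shows "S ** (- (Omega ** transpose S ** Omega)) = mat 1"
proof -
  have "S ** (- (Omega ** transpose S ** Omega)) = - ((S ** Omega ** transpose S) ** Omega)"
    by (simp add: matrix_neg_right matrix_mul_assoc)
  then show ?thesis using assms by (simp add: symplectic_def)
qed

lemma matrix_inv_symplectic:
  assumes "symplectic S" shows "matrix_inv S = - (Omega ** transpose S ** Omega)"
  by (rule matrix_inv_eqI[OF symplectic_mult_Omega_inverse[OF assms]])

lemma symplectic_matrix_inv_right: "symplectic S \<Longrightarrow> S ** matrix_inv S = mat 1"
  by (simp add: matrix_inv_symplectic symplectic_mult_Omega_inverse)

lemma symplectic_matrix_inv_left: "symplectic S \<Longrightarrow> matrix_inv S ** S = mat 1"
  using symplectic_matrix_inv_right matrix_left_right_inverse by blast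

lemma symplectic_transpose_Omega:
  assumes "symplectic S" shows "transpose S ** Omega ** S = Omega"
proof -
  have "Omega = Omega ** (matrix_inv S ** S)" using symplectic_matrix_inv_left[OF assms] by simp
  also have "\<dots> = transpose S ** Omega ** S"
    by (simp add: matrix_inv_symplectic[OF assms] matrix_neg_right matrix_neg_left matrix_mul_assoc)
  finally show ?thesis by simp
qed

lemma symplectic_transpose: "symplectic S \<Longrightarrow> symplectic (transpose S)"
  using symplectic_transpose_Omega by (simp add: symplectic_def)

lemma symplectic_matrix_inv: "symplectic S \<Longrightarrow> symplectic (matrix_inv S)"
  by (simp add: matrix_inv_symplectic symplectic_uminus symplectic_mult symplectic_Omega
      symplectic_transpose)

lemma opnorm_symplectic_matrix_inv_le:
  assumes "symplectic S" shows "opnorm (matrix_inv S) \<le> opnorm S"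
proof -
  have "opnorm (matrix_inv S) \<le> 1 * opnorm (transpose S) * 1"
    unfolding matrix_inv_symplectic[OF assms] opnorm_uminus
    by (intro opnorm_mult_le_mult opnorm_Omega_le order_refl)
  then show ?thesis by (simp add: opnorm_transpose)
qed

lemma opnorm_symplectic_ge_1:
  assumes "symplectic S" shows "1 \<le> opnorm S"
proof -
  have "opnorm (S ** matrix_inv S) \<le> opnorm S * opnorm S"
    by (rule opnorm_mult_le_mult[OF order_refl opnorm_symplectic_matrix_inv_le[OF assms]])
  then have "1 \<le> opnorm S * opnorm S"
    by (simp add: symplectic_matrix_inv_right[OF assms] opnorm_mat_1)
  then show ?thesis
    using opnorm_nonneg[of S] mult_left_mono[of "opnorm S" 1 "opnorm S"]
    by (cases "1 \<le> opnorm S") auto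
qed

lemma norm_row_symplectic_ge:
  assumes "symplectic T" shows "1 \<le> opnorm T * norm (T $ i)"
proof -
  have row: "T $ i = transpose T *v axis i 1"
    by (simp add: vec_eq_iff matrix_vector_mult_def transpose_def axis_def if_distrib if_distribR
        cong: if_cong)
  have "transpose (matrix_inv T) ** transpose T = mat 1"
    using symplectic_matrix_inv_right[OF assms] by (metis matrix_transpose_mul transpose_mat)
  then have "axis i 1 = transpose (matrix_inv T) *v (T $ i)"
    unfolding row by (simp only: matrix_vector_mul_assoc matrix_vector_mul_lid)
  then have "norm (axis i (1::real)) \<le> opnorm (matrix_inv T) * norm (T $ i)"
    by (metis opnorm_mult_vec_le opnorm_transpose)
  also have "\<dots> \<le> opnorm T * norm (T $ i)"
    by (intro mult_right_mono opnorm_symplectic_matrix_inv_le assms norm_ge_zero)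
  finally show ?thesis by simp
qed

lemma symplectic_if_orthogonal_commute:
  assumes "orthogonal_matrix Q" and "Omega ** Q = Q ** (Omega :: real^('n::finite + 'n)^('n + 'n))"
  shows "symplectic Q"
proof -
  have "Q ** Omega ** transpose Q = Omega ** (Q ** transpose Q)"
    by (simp add: assms(2) matrix_mul_assoc)
  then show ?thesis using assms(1) by (simp add: symplectic_def orthogonal_matrix_def)
qed

section \<open>Matrices almost commuting with \<Omega>\<close>

lemma commute_mult: "W ** A = A ** W \<Longrightarrow> W ** B = B ** W \<Longrightarrow> W ** (A ** B) = (A ** B) ** W"
  for W :: "real^'n^'n"
  by (metis matrix_mul_assoc)

lemma commute_add: "W ** A = A ** W \<Longrightarrow> W ** B = B ** W \<Longrightarrow> W ** (A + B) = (A + B) ** W"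
  for W :: "real^'n^'n"
  by (simp add: matrix_add_ldistrib matrix_add_rdistrib)

lemma commute_uminus: "W ** A = A ** W \<Longrightarrow> W ** (- A) = (- A) ** W"
  for W :: "real^'n^'n"
  by (simp add: matrix_neg_left matrix_neg_right)

lemma commute_scaleR: "W ** A = A ** W \<Longrightarrow> W ** (c *\<^sub>R A) = (c *\<^sub>R A) ** W"
  for W :: "real^'n^'n"
  by (simp add: matrix_scaleR_left matrix_scaleR_right)

definition inverse_sqrt_step :: "real^'n^'n \<Rightarrow> real^'n^'n \<Rightarrow> real^'n^'n" where
  "inverse_sqrt_step E Y = - ((1/2) *\<^sub>R (E + Y ** E + E ** Y + Y ** Y + Y ** E ** Y))"

lemma inverse_sqrt_step_fixpoint:
  assumes "inverse_sqrt_step E Y = Y"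
  shows "(mat 1 + Y) ** (mat 1 + E) ** (mat 1 + Y) = mat 1"
proof -
  have "2 *\<^sub>R Y = 2 *\<^sub>R inverse_sqrt_step E Y" using assms by simp
  also have "\<dots> = - (E + Y ** E + E ** Y + Y ** Y + Y ** E ** Y)"
    by (simp add: inverse_sqrt_step_def)
  finally have "2 *\<^sub>R Y + (E + Y ** E + E ** Y + Y ** Y + Y ** E ** Y) = 0"
    by (simp add: algebra_simps)
  moreover have "(mat 1 + Y) ** (mat 1 + E) ** (mat 1 + Y)
      = mat 1 + (2 *\<^sub>R Y + (E + Y ** E + E ** Y + Y ** Y + Y ** E ** Y))"
    by (simp add: matrix_add_ldistrib matrix_add_rdistrib matrix_mul_assoc algebra_simps scaleR_2)
  ultimately show ?thesis by simp
qed

lemma norm_inverse_sqrt_step_le: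
  assumes E: "norm E \<le> e" and e: "e \<le> 1/16" and Y: "norm Y \<le> 2 * e"
  shows "norm (inverse_sqrt_step E Y) \<le> 2 * e"
proof -
  have e0: "0 \<le> e" using E norm_ge_zero order_trans by blast
  have "norm (E + Y ** E + E ** Y + Y ** Y + Y ** E ** Y)
      \<le> norm E + norm Y * norm E + norm E * norm Y + norm Y * norm Y + norm Y * norm E * norm Y"
    by (intro norm_triangle_le add_mono norm_matrix_mult_le order_refl
        order_trans[OF norm_matrix_mult_le mult_right_mono[OF norm_matrix_mult_le norm_ge_zero]])
  also have "\<dots> \<le> e + 2*e*e + e*(2*e) + (2*e)*(2*e) + (2*e)*e*(2*e)"
    by (intro add_mono mult_mono E Y order_refl norm_ge_zero mult_nonneg_nonneg e0) auto
  also have "\<dots> = e * (1 + 8 * e + 4 * e * e)" by (simp add: algebra_simps)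
  also have "\<dots> \<le> e * 4"
    using e e0 mult_mono[OF e e, of] by (intro mult_left_mono) (auto simp: algebra_simps)
  finally show ?thesis by (simp add: inverse_sqrt_step_def)
qed

lemma inverse_sqrt_step_contraction:
  assumes E: "norm E \<le> e" and e: "e \<le> 1/16" and Y: "norm Y \<le> 2 * e" and Z: "norm Z \<le> 2 * e"
  shows "dist (inverse_sqrt_step E Y) (inverse_sqrt_step E Z) \<le> (1/2) * dist Y Z"
proof -
  have e0: "0 \<le> e" using E norm_ge_zero order_trans by blast
  let ?D = "Y - Z"
  have "inverse_sqrt_step E Y - inverse_sqrt_step E Z = - ((1/2) *\<^sub>R
      (?D ** E + E ** ?D + (Y ** ?D + ?D ** Z) + (Y ** E ** ?D + ?D ** E ** Z)))"
    unfolding inverse_sqrt_step_def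
    by (simp add: matrix_diff_ldistrib matrix_diff_rdistrib matrix_mul_assoc algebra_simps)
  then have "dist (inverse_sqrt_step E Y) (inverse_sqrt_step E Z) = (1/2) *
      norm (?D ** E + E ** ?D + (Y ** ?D + ?D ** Z) + (Y ** E ** ?D + ?D ** E ** Z))"
    by (simp add: dist_norm)
  also have "\<dots> \<le> (1/2) * (norm ?D * e + e * norm ?D + (2*e * norm ?D + norm ?D * (2*e))
      + (2*e*e * norm ?D + norm ?D * e * (2*e)))"
  proof -
    have DE: "norm (?D ** E) \<le> norm ?D * e"
      by (rule order_trans[OF norm_matrix_mult_le mult_left_mono[OF E norm_ge_zero]])
    have YE: "norm (Y ** E) \<le> 2*e*e"
      by (rule order_trans[OF norm_matrix_mult_le mult_mono[OF Y E]]) (use e0 in auto)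
    show ?thesis
      by (intro mult_left_mono norm_triangle_le add_mono DE order_refl
          order_trans[OF norm_matrix_mult_le mult_right_mono[OF E norm_ge_zero]]
          order_trans[OF norm_matrix_mult_le mult_right_mono[OF Y norm_ge_zero]]
          order_trans[OF norm_matrix_mult_le mult_left_mono[OF Z norm_ge_zero]]
          order_trans[OF norm_matrix_mult_le mult_right_mono[OF YE norm_ge_zero]]
          order_trans[OF norm_matrix_mult_le mult_mono[OF DE Z]])
        (use e0 in auto)
  qed
  also have "\<dots> = (3 * e + 2 * e * e) * dist Y Z" by (simp add: dist_norm algebra_simps)
  also have "\<dots> \<le> (1/2) * dist Y Z"
    using e e0 mult_mono[OF e e] by (intro mult_right_mono) auto
  finally show ?thesis .
qed

lemma inverse_sqrt_near_id:
  fixes E W :: "real^'n^'n"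
  assumes sym: "transpose E = E" and comm: "W ** E = E ** W"
    and E: "norm E \<le> e" and e: "e \<le> 1/16"
  obtains Y where "transpose Y = Y" "W ** Y = Y ** W" "norm Y \<le> 2 * e"
    "(mat 1 + Y) ** (mat 1 + E) ** (mat 1 + Y) = mat 1"
proof -
  define B where "B = {Y. transpose Y = Y} \<inter> {Y. W ** Y = Y ** W} \<inter> cball 0 (2 * e)"
  have "closed B"
    unfolding B_def
    by (intro closed_Int closed_cball closed_Collect_eq continuous_on_id linear_continuous_on
        bounded_linear_transpose bounded_linear_matrix_mult_left bounded_linear_matrix_mult_right)
  then have "complete B" by (simp add: complete_eq_closed)
  moreover have "B \<noteq> {}"
  proof -
    have "0 \<in> B" using order_trans[OF norm_ge_zero E] by (simp add: B_def)
    then show ?thesis by blast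
  qed
  moreover have "inverse_sqrt_step E ` B \<subseteq> B"
  proof
    fix Z assume "Z \<in> inverse_sqrt_step E ` B"
    then obtain Y where Y: "transpose Y = Y" "W ** Y = Y ** W" "norm Y \<le> 2 * e"
      and Z: "Z = inverse_sqrt_step E Y" by (auto simp: B_def)
    have "transpose Z = Z"
      unfolding Z inverse_sqrt_step_def
      by (simp only: transpose_neg transpose_scalar transpose_add matrix_transpose_mul Y(1) sym)
        (simp add: matrix_mul_assoc algebra_simps)
    moreover have "W ** Z = Z ** W"
      unfolding Z inverse_sqrt_step_def
      by (intro commute_uminus commute_scaleR commute_add commute_mult Y(2) comm)
    ultimately show "Z \<in> B" using norm_inverse_sqrt_step_le[OF E e Y(3)] by (simp add: B_def Z)
  qed
  moreover have "dist (inverse_sqrt_step E Y) (inverse_sqrt_step E Z) \<le> (1/2) * dist Y Z"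
    if "Y \<in> B" "Z \<in> B" for Y Z
    using that by (intro inverse_sqrt_step_contraction[OF E e]) (auto simp: B_def)
  ultimately obtain Y where "Y \<in> B" "inverse_sqrt_step E Y = Y"
    using Banach_fix[of B "1/2" "inverse_sqrt_step E"] by auto
  then show ?thesis using that inverse_sqrt_step_fixpoint by (auto simp: B_def)
qed

lemma Omega_average_commute:
  fixes T :: "real^('n::finite + 'n)^('n + 'n)"
  shows "Omega ** ((1/2) *\<^sub>R (T - Omega ** T ** Omega))
    = ((1/2) *\<^sub>R (T - Omega ** T ** Omega)) ** Omega"
  by (simp add: matrix_algebra_simps algebra_simps)

lemma norm_Omega_average_diff_le:
  fixes T :: "real^('n::finite + 'n)^('n + 'n)"
  shows "norm ((1/2) *\<^sub>R (T - Omega ** T ** Omega) - T) \<le> norm (Omega ** T - T ** Omega) / 2"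
proof -
  have "(1/2) *\<^sub>R (T - Omega ** T ** Omega) - T
      = - ((1/2) *\<^sub>R ((Omega ** T - T ** Omega) ** Omega))"
    by (simp add: matrix_algebra_simps vec_eq_iff field_simps)
  then show ?thesis using norm_Omega_mult_right[of "Omega ** T - T ** Omega"] by simp
qed

lemma symplectic_transpose_mult_self:
  assumes "symplectic T"
  shows "transpose T ** T = mat 1 + transpose T ** (Omega ** T - T ** Omega) ** Omega"
  using symplectic_transpose_Omega[OF assms] by (simp add: matrix_algebra_simps)

lemma Omega_average_near_isometry:
  fixes T :: "real^('n::finite + 'n)^('n + 'n)"
  defines "X \<equiv> (1/2) *\<^sub>R (T - Omega ** T ** Omega)"
  assumes symp: "symplectic T" and T: "opnorm T \<le> \<tau>"
    and C: "norm (Omega ** T - T ** Omega) \<le> \<gamma>" and \<gamma>1: "\<gamma> \<le> 1"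
  shows "norm (transpose X ** X - mat 1) \<le> 2 * (\<tau> + 1) * \<gamma>"
proof -
  have \<gamma>0: "0 \<le> \<gamma>" and \<tau>0: "0 \<le> \<tau>"
    using C T norm_ge_zero opnorm_nonneg order_trans by blast+
  define D where "D = X - T"
  have D: "norm D \<le> \<gamma> / 2"
    using norm_Omega_average_diff_le[of T] C by (simp add: D_def X_def)
  have "transpose X ** X - mat 1 = transpose T ** (Omega ** T - T ** Omega) ** Omega
      + transpose T ** D + transpose D ** T + transpose D ** D"
    using symplectic_transpose_mult_self[OF symp]
    by (simp add: D_def transpose_diff matrix_algebra_simps algebra_simps)
  moreover have "norm (transpose T ** (Omega ** T - T ** Omega) ** Omega) \<le> \<tau> * \<gamma>"
    by (rule order_trans[OF norm_Omega_mult_right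
          order_trans[OF norm_matrix_mult_le_left mult_mono]])
      (use C T \<tau>0 in \<open>simp_all add: opnorm_transpose\<close>)
  moreover have "norm (transpose T ** D) \<le> \<tau> * (\<gamma>/2)"
    by (rule order_trans[OF norm_matrix_mult_le_left mult_mono])
      (use D T \<tau>0 in \<open>simp_all add: opnorm_transpose\<close>)
  moreover have "norm (transpose D ** T) \<le> (\<gamma>/2) * \<tau>"
    by (rule order_trans[OF norm_matrix_mult_le_right mult_mono])
      (use D T \<gamma>0 opnorm_nonneg[of T] in \<open>simp_all add: norm_transpose\<close>)
  moreover have "norm (transpose D ** D) \<le> (\<gamma>/2) * (\<gamma>/2)"
    by (rule order_trans[OF norm_matrix_mult_le mult_mono])
      (use D \<gamma>0 in \<open>simp_all add: norm_transpose\<close>)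
  ultimately have "norm (transpose X ** X - mat 1)
      \<le> \<tau> * \<gamma> + \<tau> * (\<gamma>/2) + (\<gamma>/2) * \<tau> + (\<gamma>/2) * (\<gamma>/2)"
    by (metis (no_types, lifting) norm_triangle_le add_mono)
  also have "\<dots> \<le> 2 * (\<tau> + 1) * \<gamma>"
    using \<gamma>1 \<gamma>0 mult_right_mono[of \<gamma> 1 \<gamma>] by (simp add: algebra_simps)
  finally show ?thesis .
qed

lemma commuting_near_isometry_near_orthosymplectic:
  fixes X :: "real^('n::finite + 'n)^('n + 'n)"
  assumes X_comm: "Omega ** X = X ** Omega"
    and E: "norm (transpose X ** X - mat 1) \<le> e" and e: "e \<le> 1/16"
  obtains Q where "symplectic Q" "orthogonal_matrix Q" "norm (X - Q) \<le> opnorm X * (2 * e)"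
proof -
  define E where "E = transpose X ** X - mat 1"
  have "Omega ** transpose X = transpose X ** Omega"
    using arg_cong[OF X_comm, of transpose]
    by (simp add: matrix_transpose_mul transpose_Omega matrix_neg_left matrix_neg_right)
  then have "Omega ** (transpose X ** X) = (transpose X ** X) ** Omega"
    by (intro commute_mult X_comm)
  then have E_comm: "Omega ** E = E ** Omega"
    unfolding E_def by (simp add: matrix_diff_ldistrib matrix_diff_rdistrib)
  have E_sym: "transpose E = E" by (simp add: E_def transpose_diff matrix_transpose_mul)
  obtain Y where Y: "transpose Y = Y" "Omega ** Y = Y ** Omega" "norm Y \<le> 2 * e"
    and Y_inv: "(mat 1 + Y) ** (mat 1 + E) ** (mat 1 + Y) = mat 1"
    using inverse_sqrt_near_id[OF E_sym E_comm E[folded E_def] e] by blast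
  define Q where "Q = X ** (mat 1 + Y)"
  have "transpose Q ** Q = (mat 1 + Y) ** (mat 1 + E) ** (mat 1 + Y)"
    by (simp add: Q_def E_def matrix_transpose_mul transpose_add Y(1) matrix_mul_assoc)
  then have orth: "orthogonal_matrix Q" using Y_inv by (simp add: orthogonal_matrix)
  moreover have "symplectic Q"
    using orth by (intro symplectic_if_orthogonal_commute)
      (simp_all add: Q_def commute_mult commute_add X_comm Y(2))
  moreover have "norm (X - Q) \<le> opnorm X * (2 * e)"
    using order_trans[OF norm_matrix_mult_le_left mult_left_mono[OF Y(3) opnorm_nonneg]]
    by (simp add: Q_def matrix_add_ldistrib)
  ultimately show ?thesis using that by blast
qed

lemma symplectic_near_orthosymplectic:
  fixes T :: "real^('n::finite + 'n)^('n + 'n)"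
  assumes symp: "symplectic T" and T: "opnorm T \<le> \<tau>"
    and C: "norm (Omega ** T - T ** Omega) \<le> \<gamma>" and small: "32 * (\<tau> + 1) * \<gamma> \<le> 1"
  obtains Q where "symplectic Q" "orthogonal_matrix Q" "norm (T - Q) \<le> 5 * (\<tau> + 1)^2 * \<gamma>"
proof -
  have \<gamma>0: "0 \<le> \<gamma>" and \<tau>0: "0 \<le> \<tau>"
    using C T norm_ge_zero opnorm_nonneg order_trans by blast+
  have \<gamma>1: "\<gamma> \<le> 1"
    using small \<tau>0 \<gamma>0 mult_right_mono[of 1 "32 * (\<tau> + 1)" \<gamma>] by simp
  define X where "X = (1/2) *\<^sub>R (T - Omega ** T ** Omega)"
  have X: "norm (X - T) \<le> \<gamma> / 2"
    using norm_Omega_average_diff_le[of T] C by (simp add: X_def)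
  have X_opnorm: "opnorm X \<le> \<tau> + 1"
    using opnorm_add_le[of T "X - T"] opnorm_le_norm[of "X - T"] T X \<gamma>1 by simp
  have "norm (transpose X ** X - mat 1) \<le> 2 * (\<tau> + 1) * \<gamma>"
    unfolding X_def by (rule Omega_average_near_isometry[OF symp T C \<gamma>1])
  moreover have "2 * (\<tau> + 1) * \<gamma> \<le> 1/16" using small by (simp add: algebra_simps)
  moreover have "Omega ** X = X ** Omega" unfolding X_def by (rule Omega_average_commute)
  ultimately obtain Q where Q: "symplectic Q" "orthogonal_matrix Q"
    "norm (X - Q) \<le> opnorm X * (2 * (2 * (\<tau> + 1) * \<gamma>))"
    using commuting_near_isometry_near_orthosymplectic by blast
  have "norm (T - Q) \<le> norm (X - T) + norm (X - Q)"
    using norm_triangle_ineq4[of "X - Q" "X - T"] by simp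
  also have "\<dots> \<le> \<gamma> / 2 + (\<tau> + 1) * (2 * (2 * (\<tau> + 1) * \<gamma>))"
  proof -
    have "0 \<le> 2 * (2 * (\<tau> + 1) * \<gamma>)" using \<tau>0 \<gamma>0 by simp
    then show ?thesis using X Q(3) mult_right_mono[OF X_opnorm] by fastforce
  qed
  also have "\<dots> \<le> 5 * (\<tau> + 1)^2 * \<gamma>"
  proof -
    have "1 \<le> (\<tau> + 1)^2" using \<tau>0 by (simp add: one_le_power)
    then have "\<gamma> \<le> (\<tau> + 1)^2 * \<gamma>" using mult_right_mono[of 1 "(\<tau> + 1)^2" \<gamma>] \<gamma>0 by simp
    moreover have "(\<tau> + 1) * (2 * (2 * (\<tau> + 1) * \<gamma>)) = 4 * ((\<tau> + 1)^2 * \<gamma>)"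
      "5 * (\<tau> + 1)^2 * \<gamma> = 5 * ((\<tau> + 1)^2 * \<gamma>)"
      by (simp_all add: power2_eq_square algebra_simps)
    ultimately show ?thesis using \<gamma>0 by linarith
  qed
  finally show ?thesis using that Q(1,2) by blast
qed

section \<open>Approximate intertwiners of diagonal matrices\<close>

lemma half_integer_square_gap:
  fixes x y :: nat
  assumes "x \<noteq> y"
  shows "2 \<le> \<bar>(1/2 + real x)^2 - (1/2 + real y)^2\<bar>"
proof -
  have "(1/2 + real x)^2 - (1/2 + real y)^2 = (real x - real y) * (1 + real x + real y)"
    by (simp add: power2_eq_square algebra_simps)
  moreover have "1 * 2 \<le> \<bar>real x - real y\<bar> * (1 + real x + real y)"
  proof (rule mult_mono)
    show "1 \<le> \<bar>real x - real y\<bar>" using assms by (cases "x < y") auto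
    show "2 \<le> 1 + real x + real y" using assms by (cases x; cases y) auto
  qed simp_all
  ultimately show ?thesis by (simp add: abs_mult)
qed

lemma abs_diff_le_abs_square_diff:
  fixes x y :: real
  assumes "1/2 \<le> x" "1/2 \<le> y"
  shows "\<bar>x - y\<bar> \<le> \<bar>x^2 - y^2\<bar>"
proof -
  have "x^2 - y^2 = (x - y) * (x + y)" by (simp add: power2_eq_square algebra_simps)
  then have "\<bar>x^2 - y^2\<bar> = \<bar>x - y\<bar> * (x + y)" using assms by (simp add: abs_mult)
  moreover have "\<bar>x - y\<bar> * 1 \<le> \<bar>x - y\<bar> * (x + y)"
    using assms by (intro mult_left_mono) auto
  ultimately show ?thesis by simp
qed

lemma exists_small_multiplier:
  fixes t e w :: "real^'m"
  assumes eq: "\<And>j. t $ j * w $ j = \<epsilon> * e $ j"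
    and t: "t \<noteq> 0" and bound: "\<epsilon> * norm e \<le> \<delta> * norm t" and "0 \<le> \<delta>" "0 \<le> \<epsilon>"
  shows "\<exists>j. \<bar>w $ j\<bar> \<le> \<delta>"
proof (rule ccontr)
  assume "\<not> (\<exists>j. \<bar>w $ j\<bar> \<le> \<delta>)"
  then have "\<delta> < \<bar>w $ j\<bar>" for j by (simp add: not_le)
  then have big: "\<delta>^2 < (w $ j)^2" for j
    using power_strict_mono[of \<delta> "\<bar>w $ j\<bar>" 2] \<open>0 \<le> \<delta>\<close> by simp
  obtain j0 where j0: "t $ j0 \<noteq> 0" using t by (auto simp: vec_eq_iff)
  have "(\<Sum>j\<in>UNIV. (t $ j)^2 * \<delta>^2) < (\<Sum>j\<in>UNIV. (t $ j)^2 * (w $ j)^2)"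
  proof (rule sum_strict_mono_ex1)
    show "\<forall>j\<in>UNIV. (t $ j)^2 * \<delta>^2 \<le> (t $ j)^2 * (w $ j)^2"
      using big by (simp add: less_imp_le mult_left_mono)
    show "\<exists>j\<in>UNIV. (t $ j)^2 * \<delta>^2 < (t $ j)^2 * (w $ j)^2"
      using j0 big[of j0] by (intro bexI[of _ j0]) simp_all
  qed simp
  also have "\<dots> = (\<Sum>j\<in>UNIV. (\<epsilon> * e $ j)^2)"
    by (intro sum.cong refl) (metis eq power_mult_distrib)
  also have "\<dots> = (\<epsilon> * norm e)^2"
    by (simp add: norm_vec_power2 power_mult_distrib sum_distrib_left)
  also have "\<dots> \<le> (\<delta> * norm t)^2"
    using bound \<open>0 \<le> \<epsilon>\<close> by (intro power_mono) auto
  also have "\<dots> = (\<Sum>j\<in>UNIV. (t $ j)^2 * \<delta>^2)"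
    by (simp add: norm_vec_power2 power_mult_distrib sum_distrib_left mult.commute)
  finally show False by simp
qed

lemma symplectic_intertwiner_spectra_close:
  fixes T E :: "real^('n::finite + 'n)^('n + 'n)"
  assumes "symplectic T" and eq: "T ** diag2 k - diag2 d ** T = \<epsilon> *\<^sub>R E" and "0 \<le> \<epsilon>"
  shows "\<exists>b. \<bar>k $ b - d $ a\<bar> \<le> \<epsilon> * opnorm E * opnorm T"
proof -
  let ?i = "Inl a :: 'n + 'n"
  have row: "1 \<le> opnorm T * norm (T $ ?i)" by (rule norm_row_symplectic_ge[OF assms(1)])
  have "\<epsilon> * norm (E $ ?i) \<le> \<epsilon> * opnorm E"
    by (rule mult_left_mono[OF norm_row_le_opnorm \<open>0 \<le> \<epsilon>\<close>])
  also have "\<dots> \<le> \<epsilon> * opnorm E * (opnorm T * norm (T $ ?i))"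
    using mult_left_mono[OF row, of "\<epsilon> * opnorm E"] \<open>0 \<le> \<epsilon>\<close> opnorm_nonneg[of E] by simp
  finally have bound: "\<epsilon> * norm (E $ ?i) \<le> (\<epsilon> * opnorm E * opnorm T) * norm (T $ ?i)"
    by (simp only: mult.assoc)
  have "T $ ?i $ j * (\<chi> j. k $ mode j - d $ a) $ j = \<epsilon> * E $ ?i $ j" for j
    using arg_cong[OF eq, of "\<lambda>A. A $ ?i $ j"]
    by (simp add: diag2_mult_left_entry diag2_mult_right_entry algebra_simps)
  moreover have "T $ ?i \<noteq> 0" using row by auto
  moreover have "0 \<le> \<epsilon> * opnorm E * opnorm T"
    using \<open>0 \<le> \<epsilon>\<close> by (simp add: opnorm_nonneg)
  ultimately obtain j where "\<bar>(\<chi> j. k $ mode j - d $ a) $ j\<bar> \<le> \<epsilon> * opnorm E * opnorm T"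
    using exists_small_multiplier[OF _ _ bound _ \<open>0 \<le> \<epsilon>\<close>] by blast
  then show ?thesis by auto
qed

definition block_part :: "real^'n \<Rightarrow> real^'n \<Rightarrow> real^('n + 'n)^('n + 'n) \<Rightarrow> real^('n + 'n)^('n + 'n)"
  where "block_part \<nu> k T = (\<chi> i j. if k $ mode j = \<nu> $ mode i then T $ i $ j else 0)"

lemma block_part_intertwines: "block_part \<nu> k T ** diag2 k = diag2 \<nu> ** block_part \<nu> k T"
  by (simp add: vec_eq_iff diag2_mult_left_entry diag2_mult_right_entry block_part_def)

lemma norm_sub_block_part_le:
  fixes T E :: "real^('n::finite + 'n)^('n + 'n)"
  assumes eq: "T ** diag2 k' - diag2 d ** T = \<epsilon> *\<^sub>R E"
    and gap: "\<And>a b. k $ b \<noteq> \<nu> $ a \<Longrightarrow> 1 \<le> \<bar>k' $ b - d $ a\<bar>" and "0 \<le> \<epsilon>"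
  shows "norm (T - block_part \<nu> k T) \<le> \<epsilon> * norm E"
proof -
  have "\<bar>(T - block_part \<nu> k T) $ i $ j\<bar> \<le> \<bar>(\<epsilon> *\<^sub>R E) $ i $ j\<bar>" for i j
  proof (cases "k $ mode j = \<nu> $ mode i")
    case False
    have "T $ i $ j * (k' $ mode j - d $ mode i) = \<epsilon> * E $ i $ j"
      using arg_cong[OF eq, of "\<lambda>A. A $ i $ j"]
      by (simp add: diag2_mult_left_entry diag2_mult_right_entry algebra_simps)
    then have "\<bar>T $ i $ j\<bar> * \<bar>k' $ mode j - d $ mode i\<bar> = \<bar>\<epsilon> * E $ i $ j\<bar>"
      by (metis abs_mult)
    moreover have "\<bar>T $ i $ j\<bar> * 1 \<le> \<bar>T $ i $ j\<bar> * \<bar>k' $ mode j - d $ mode i\<bar>"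
      by (rule mult_left_mono[OF gap[OF False] abs_ge_zero])
    ultimately show ?thesis using False by (simp add: block_part_def)
  qed (simp add: block_part_def)
  then have "norm (T - block_part \<nu> k T) \<le> norm (\<epsilon> *\<^sub>R E)" by (rule norm_matrix_le_entrywise)
  then show ?thesis using \<open>0 \<le> \<epsilon>\<close> by simp
qed

lemma diag2_mult: "diag2 d ** diag2 e = diag2 (\<chi> a. d $ a * e $ a)"
  by (simp add: vec_eq_iff diag2_mult_left_entry diag2_entry)

lemma symplectic_congruence_intertwines:
  assumes "symplectic T" and "diag2 d = T ** diag2 k ** transpose T + \<epsilon> *\<^sub>R G"
  shows "diag2 d ** Omega ** T = T ** diag2 k ** Omega + \<epsilon> *\<^sub>R (G ** Omega ** T)"
proof -
  have "diag2 d ** Omega ** T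
      = (T ** diag2 k) ** (transpose T ** Omega ** T) + \<epsilon> *\<^sub>R (G ** Omega ** T)"
    by (simp add: assms(2) matrix_algebra_simps)
  then show ?thesis by (simp add: symplectic_transpose_Omega[OF assms(1)])
qed

lemma commute_Omega_mult_self:
  assumes "K ** Omega = Omega ** (K :: real^('n::finite + 'n)^('n + 'n))"
  shows "K ** Omega ** K ** Omega = - (K ** K)"
proof -
  have "K ** Omega ** K ** Omega = K ** (Omega ** K) ** Omega" by (simp add: matrix_mul_assoc)
  then show ?thesis by (simp add: assms[symmetric] matrix_mul_assoc)
qed

lemma intertwining_squares:
  fixes K K' T E :: "real^('n::finite + 'n)^('n + 'n)"
  assumes K: "K ** Omega = Omega ** K" and K': "K' ** Omega = Omega ** K'"
    and eq: "K' ** Omega ** T = T ** K ** Omega + \<epsilon> *\<^sub>R E"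
  shows "T ** (K ** K) - (K' ** K') ** T = \<epsilon> *\<^sub>R (E ** K ** Omega + K' ** Omega ** E)"
proof -
  have "- ((K' ** K') ** T) = (K' ** Omega ** K' ** Omega) ** T"
    by (simp add: commute_Omega_mult_self[OF K'] matrix_neg_left)
  also have "\<dots> = (K' ** Omega) ** (K' ** Omega ** T)" by (simp add: matrix_mul_assoc)
  also have "\<dots> = (K' ** Omega ** T) ** K ** Omega + \<epsilon> *\<^sub>R (K' ** Omega ** E)"
    by (simp add: eq matrix_algebra_simps)
  also have "\<dots> = T ** (K ** Omega ** K ** Omega) + \<epsilon> *\<^sub>R (E ** K ** Omega + K' ** Omega ** E)"
    by (simp add: eq matrix_algebra_simps scaleR_add_right)
  finally show ?thesis
    by (simp add: commute_Omega_mult_self[OF K] matrix_neg_right algebra_simps)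
qed

lemma half_integer_spectrum_matching:
  fixes T E :: "real^('n::finite + 'n)^('n + 'n)" and k d :: "real^'n"
  assumes k: "\<And>a. \<exists>m::nat. k $ a = 1/2 + real m" and "symplectic T"
    and eq: "T ** diag2 (\<chi> a. k $ a ^ 2) - diag2 (\<chi> a. d $ a ^ 2) ** T = \<epsilon> *\<^sub>R E"
    and d: "\<And>a. 1/2 \<le> d $ a" and "0 \<le> \<epsilon>" and \<delta>: "\<epsilon> * opnorm E * opnorm T \<le> 1/2"
  obtains \<nu> where "\<And>a. \<exists>b. \<nu> $ a = k $ b" "\<And>a. \<bar>d $ a - \<nu> $ a\<bar> \<le> \<epsilon> * opnorm E * opnorm T"
    "\<And>a b. k $ b \<noteq> \<nu> $ a \<Longrightarrow> 1 \<le> \<bar>k $ b ^ 2 - d $ a ^ 2\<bar>"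
proof -
  let ?\<delta> = "\<epsilon> * opnorm E * opnorm T"
  have "\<forall>a. \<exists>b. \<bar>k $ b ^ 2 - d $ a ^ 2\<bar> \<le> ?\<delta>"
    using symplectic_intertwiner_spectra_close[OF assms(2) eq \<open>0 \<le> \<epsilon>\<close>] by simp
  then obtain \<beta> where \<beta>: "\<And>a. \<bar>k $ \<beta> a ^ 2 - d $ a ^ 2\<bar> \<le> ?\<delta>" by metis
  define \<nu> where "\<nu> = (\<chi> a. k $ \<beta> a)"
  show ?thesis
  proof (rule that)
    show "\<exists>b. \<nu> $ a = k $ b" for a by (auto simp: \<nu>_def)
    show "\<bar>d $ a - \<nu> $ a\<bar> \<le> ?\<delta>" for a
    proof -
      have "1/2 \<le> k $ \<beta> a" using k[of "\<beta> a"] by auto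
      then show ?thesis
        using abs_diff_le_abs_square_diff[OF d, of "k $ \<beta> a" a] \<beta>[of a]
        by (simp add: \<nu>_def abs_minus_commute)
    qed
    show "1 \<le> \<bar>k $ b ^ 2 - d $ a ^ 2\<bar>" if "k $ b \<noteq> \<nu> $ a" for a b
    proof -
      obtain m m' :: nat where "k $ b = 1/2 + real m" "k $ \<beta> a = 1/2 + real m'"
        using k by metis
      moreover have "m \<noteq> m'" using that calculation by (auto simp: \<nu>_def)
      ultimately have "2 \<le> \<bar>k $ b ^ 2 - k $ \<beta> a ^ 2\<bar>" by (simp add: half_integer_square_gap)
      then show ?thesis using \<beta>[of a] \<delta> by linarith
    qed
  qed
qed

lemma norm_le_twice_norm_diag2_mult:
  fixes A :: "real^'m^('n::finite + 'n)"
  assumes "\<And>a. 1/2 \<le> \<nu> $ a"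
  shows "norm A \<le> 2 * norm (diag2 \<nu> ** A)"
proof -
  have "norm A \<le> norm ((2::real) *\<^sub>R (diag2 \<nu> ** A))"
  proof (rule norm_matrix_le_entrywise)
    fix i j
    have "\<bar>A $ i $ j\<bar> * 1 \<le> \<bar>A $ i $ j\<bar> * (2 * \<nu> $ mode i)"
      using assms[of "mode i"] by (intro mult_left_mono) auto
    then show "\<bar>A $ i $ j\<bar> \<le> \<bar>(2 *\<^sub>R (diag2 \<nu> ** A)) $ i $ j\<bar>"
      using assms[of "mode i"] by (simp add: diag2_mult_left_entry abs_mult algebra_simps)
  qed
  then show ?thesis by simp
qed

lemma block_commutator_identity:
  fixes T T0 E K K' N :: "real^('n::finite + 'n)^('n + 'n)"
  assumes eq: "K' ** Omega ** T = T ** K ** Omega + \<epsilon> *\<^sub>R E" and T0: "T0 ** K = N ** T0"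
    and N: "N ** Omega = Omega ** N" and K': "K' ** Omega = Omega ** K'"
  shows "N ** (Omega ** T0 - T0 ** Omega)
    = \<epsilon> *\<^sub>R E - K' ** Omega ** (T - T0) + (T - T0) ** K ** Omega - Omega ** (K' - N) ** T0"
proof -
  have "K' ** Omega ** T0 - T0 ** K ** Omega
      = \<epsilon> *\<^sub>R E - K' ** Omega ** (T - T0) + (T - T0) ** K ** Omega"
    using eq by (simp add: matrix_algebra_simps algebra_simps)
  moreover have "K' ** Omega ** T0 - T0 ** K ** Omega
      = N ** (Omega ** T0 - T0 ** Omega) + Omega ** (K' - N) ** T0"
    using T0 by (simp add: K' N[symmetric] matrix_algebra_simps algebra_simps)
  ultimately show ?thesis by (simp add: algebra_simps)
qed

lemma norm_block_commutator_le:
  fixes T E :: "real^('n::finite + 'n)^('n + 'n)" and k d \<nu> :: "real^'n"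
  defines "T0 \<equiv> block_part \<nu> k T"
  assumes eq: "diag2 d ** Omega ** T = T ** diag2 k ** Omega + \<epsilon> *\<^sub>R E" and "0 \<le> \<epsilon>"
  shows "norm (diag2 \<nu> ** (Omega ** T0 - T0 ** Omega)) \<le> \<epsilon> * norm E
    + opnorm (diag2 d) * norm (T - T0) + norm (T - T0) * opnorm (diag2 k)
    + norm (diag2 d - diag2 \<nu>) * opnorm T0"
proof -
  let ?\<Delta> = "T - T0"
  have id: "diag2 \<nu> ** (Omega ** T0 - T0 ** Omega) = \<epsilon> *\<^sub>R E - diag2 d ** Omega ** ?\<Delta>
      + ?\<Delta> ** diag2 k ** Omega - Omega ** (diag2 d - diag2 \<nu>) ** T0"
    unfolding T0_def
    by (rule block_commutator_identity[OF eq block_part_intertwines diag2_Omega_commute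
          diag2_Omega_commute])
  have triangle: "norm (a - b + c - e) \<le> norm a + norm b + norm c + norm e"
    for a b c e :: "real^('n + 'n)^('n + 'n)"
    using norm_triangle_ineq4[of "a - b + c" e] norm_triangle_ineq[of "a - b" c]
      norm_triangle_ineq4[of a b]
    by linarith
  have "norm (\<epsilon> *\<^sub>R E) \<le> \<epsilon> * norm E" using \<open>0 \<le> \<epsilon>\<close> by simp
  moreover have "norm (diag2 d ** Omega ** ?\<Delta>) \<le> opnorm (diag2 d) * norm ?\<Delta>"
    using opnorm_mult_le_mult[OF order_refl opnorm_Omega_le, of "diag2 d"]
    by (intro order_trans[OF norm_matrix_mult_le_left mult_right_mono]) simp_all
  moreover have "norm (?\<Delta> ** diag2 k ** Omega) \<le> norm ?\<Delta> * opnorm (diag2 k)"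
    by (rule order_trans[OF norm_Omega_mult_right norm_matrix_mult_le_right])
  moreover have "norm (Omega ** (diag2 d - diag2 \<nu>) ** T0) \<le> norm (diag2 d - diag2 \<nu>) * opnorm T0"
    by (rule order_trans[OF norm_matrix_mult_le_right
          mult_right_mono[OF norm_Omega_mult_left opnorm_nonneg]])
  ultimately show ?thesis
    using triangle[of "\<epsilon> *\<^sub>R E" "diag2 d ** Omega ** ?\<Delta>" "?\<Delta> ** diag2 k ** Omega"
        "Omega ** (diag2 d - diag2 \<nu>) ** T0"]
    unfolding id by linarith
qed

lemma norm_commutator_le_block_part:
  fixes T E :: "real^('n::finite + 'n)^('n + 'n)" and k d \<nu> :: "real^'n"
  defines "T0 \<equiv> block_part \<nu> k T"
  assumes eq: "diag2 d ** Omega ** T = T ** diag2 k ** Omega + \<epsilon> *\<^sub>R E"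
    and \<nu>: "\<And>a. 1/2 \<le> \<nu> $ a" and "0 \<le> \<epsilon>"
  shows "norm (Omega ** T - T ** Omega) \<le> 2 * (\<epsilon> * norm E + opnorm (diag2 d) * norm (T - T0)
    + norm (T - T0) * opnorm (diag2 k) + norm (diag2 d - diag2 \<nu>) * opnorm T0) + 2 * norm (T - T0)"
proof -
  let ?C = "Omega ** T0 - T0 ** Omega" and ?\<Delta> = "T - T0"
  have "norm ?C \<le> 2 * norm (diag2 \<nu> ** ?C)" by (rule norm_le_twice_norm_diag2_mult[OF \<nu>])
  moreover have "norm (Omega ** ?\<Delta> - ?\<Delta> ** Omega) \<le> 2 * norm ?\<Delta>"
    using norm_triangle_ineq4[of "Omega ** ?\<Delta>" "?\<Delta> ** Omega"] norm_Omega_mult_left[of ?\<Delta>]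
      norm_Omega_mult_right[of ?\<Delta>] by linarith
  moreover have "norm (Omega ** T - T ** Omega) \<le> norm ?C + norm (Omega ** ?\<Delta> - ?\<Delta> ** Omega)"
  proof -
    have "Omega ** T - T ** Omega = ?C + (Omega ** ?\<Delta> - ?\<Delta> ** Omega)"
      by (simp add: matrix_algebra_simps algebra_simps)
    then show ?thesis by (metis norm_triangle_ineq)
  qed
  ultimately have "norm (Omega ** T - T ** Omega) \<le> 2 * norm (diag2 \<nu> ** ?C) + 2 * norm ?\<Delta>"
    by linarith
  then show ?thesis
    using mult_left_mono[OF norm_block_commutator_le[OF eq \<open>0 \<le> \<epsilon>\<close>, of \<nu>, folded T0_def], of 2]
    by linarith
qed

section \<open>Perturbed normal forms\<close>

lemma monomial_mono:
  fixes a b c :: real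
  assumes "1 \<le> a" "1 \<le> b" "1 \<le> c" "i \<le> i'" "j \<le> j'" "l \<le> l'"
  shows "a^i * b^j * c^l \<le> a^i' * b^j' * c^l'"
proof -
  have "a^i \<le> a^i'" "b^j \<le> b^j'" "c^l \<le> c^l'" using assms by (auto intro: power_increasing)
  then show ?thesis using assms by (intro mult_mono) auto
qed

text \<open>This is where the exponent 1/8 of the theorem comes from: with \<epsilon> = \<beta>^8 and
  X = 8 \<beta> a^13 m^3 q^2 < 1, the monomial X^8 dominates every term of the small regime, while
  X^8 \<le> X.\<close>

lemma small_regime_key:
  fixes a m q \<beta> :: real
  assumes "1 \<le> a" "1 \<le> m" "1 \<le> q" "0 \<le> \<beta>" and small: "8 * \<beta> * a^13 * m^3 * q^2 < 1"
  shows "16777216 * (\<beta>^8 * (a^104 * m^24 * q^16)) \<le> 8 * \<beta> * a^13 * m^3 * q^2"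
proof -
  define X where "X = 8 * \<beta> * a^13 * m^3 * q^2"
  have "X^8 = 16777216 * (\<beta>^8 * (a^104 * m^24 * q^16))"
    by (simp add: X_def power_mult_distrib power_mult[symmetric] algebra_simps)
  moreover have "X^8 \<le> X"
    using power_decreasing[of 1 8 X] small assms(1-4) by (simp add: X_def)
  ultimately show ?thesis unfolding X_def[symmetric] by linarith
qed

lemma small_regime_smallness:
  fixes a m q \<beta> :: real
  assumes a: "1 \<le> a" and m: "1 \<le> m" and q: "1 \<le> q" and \<beta>: "0 \<le> \<beta>"
    and small: "8 * \<beta> * a^13 * m^3 * q^2 < 1"
  shows "2^15 * (a^8 * q^2)^7 * (sqrt 2 * m * \<beta>^8) \<le> 1"
proof -
  have P: "16777216 * (\<beta>^8 * (a^104 * m^24 * q^16)) \<le> 1"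
    using small_regime_key[OF a m q \<beta> small] small by linarith
  have "a^56 * m^1 * q^14 \<le> a^104 * m^24 * q^16" by (rule monomial_mono) (use a m q in auto)
  then have "a^56 * m^1 * q^14 * \<beta>^8 \<le> a^104 * m^24 * q^16 * \<beta>^8"
    by (rule mult_right_mono) (use \<beta> in simp)
  moreover have "(a^8 * q^2)^7 * m * \<beta>^8 = a^56 * m^1 * q^14 * \<beta>^8"
    by (simp add: power_mult_distrib power_mult[symmetric] mult_ac)
  moreover have "a^104 * m^24 * q^16 * \<beta>^8 = \<beta>^8 * (a^104 * m^24 * q^16)" by (simp add: mult_ac)
  moreover have "2^15 * (a^8 * q^2)^7 * (sqrt 2 * m * \<beta>^8) \<le> 65536 * ((a^8 * q^2)^7 * m * \<beta>^8)"
    using mult_right_mono[OF sqrt2_less_2[THEN less_imp_le], of "2^15 * (a^8 * q^2)^7 * m * \<beta>^8"]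
      a q m \<beta> by (simp add: mult_ac)
  ultimately show ?thesis using P by linarith
qed

lemma small_regime_bound:
  fixes a m q \<beta> :: real
  assumes a: "1 \<le> a" and m: "1 \<le> m" and q: "1 \<le> q" and \<beta>: "0 \<le> \<beta>"
    and small: "8 * \<beta> * a^13 * m^3 * q^2 < 1"
  shows "11160 * (a^8 * q^2)^8 * (sqrt 2 * m * \<beta>^8) \<le> 3 * a^8 * q * (8 * \<beta> * a^13 * m^3 * q^2)"
proof -
  define P where "P = \<beta>^8 * (a^104 * m^24 * q^16)"
  have P0: "0 \<le> P" using \<beta> a m q by (simp add: P_def)
  have "a^64 * m^1 * q^16 \<le> a^112 * m^24 * q^17" by (rule monomial_mono) (use a m q in auto)
  then have "a^64 * m^1 * q^16 * \<beta>^8 \<le> a^112 * m^24 * q^17 * \<beta>^8"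
    by (rule mult_right_mono) (use \<beta> in simp)
  moreover have "(a^8 * q^2)^8 * m * \<beta>^8 = a^64 * m^1 * q^16 * \<beta>^8"
    by (simp add: power_mult_distrib power_mult[symmetric] mult_ac)
  moreover have "a^112 * m^24 * q^17 * \<beta>^8 = a^8 * q * P"
    by (simp add: P_def power_add[symmetric] power_Suc[symmetric] mult_ac)
  ultimately have "(a^8 * q^2)^8 * m * \<beta>^8 \<le> a^8 * q * P" by linarith
  moreover have "11160 * (a^8 * q^2)^8 * (sqrt 2 * m * \<beta>^8) \<le> 22320 * ((a^8 * q^2)^8 * m * \<beta>^8)"
    using mult_right_mono[OF sqrt2_less_2[THEN less_imp_le], of "11160 * (a^8 * q^2)^8 * m * \<beta>^8"]
      a q m \<beta> by (simp add: mult_ac)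
  moreover have "22320 * (a^8 * q * P) \<le> 3 * a^8 * q * (8 * \<beta> * a^13 * m^3 * q^2)"
    using mult_left_mono[OF small_regime_key[OF a m q \<beta> small, folded P_def], of "a^8 * q"] a q P0
    by simp
  ultimately show ?thesis using a q by (smt (verit) mult_left_mono zero_le_power mult_nonneg_nonneg)
qed

lemma power_mult_le_power_mult:
  fixes L x :: real
  assumes "1 \<le> L" "m \<le> n" "0 \<le> x"
  shows "L^m * x \<le> L^n * x"
  using assms by (intro mult_right_mono power_increasing) auto

lemma commutator_estimate_arith:
  fixes L x :: real
  assumes L: "1 \<le> L" and x: "0 \<le> x"
  shows "2 * (4 * L^2 * x + 2 * L^2 * (12 * L^4 * x) + 12 * L^4 * x * L
      + 24 * L^5 * x * (2 * L + 1)) + 2 * (12 * L^4 * x) \<le> 248 * (L^6 * x)"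
proof -
  have "2 * (4 * L^2 * x + 2 * L^2 * (12 * L^4 * x) + 12 * L^4 * x * L
      + 24 * L^5 * x * (2 * L + 1)) + 2 * (12 * L^4 * x)
      = 8 * (L^2 * x) + 144 * (L^6 * x) + 72 * (L^5 * x) + 24 * (L^4 * x)"
    by (simp add: power_numeral_reduce algebra_simps)
  moreover have "L^2 * x \<le> L^6 * x" "L^4 * x \<le> L^6 * x" "L^5 * x \<le> L^6 * x"
    using x by (simp_all add: power_mult_le_power_mult[OF L])
  ultimately show ?thesis by linarith
qed

locale perturbed_normal_form =
  fixes T G :: "real^('n::finite + 'n)^('n + 'n)" and k d :: "real^'n" and \<epsilon> L :: real
  assumes symplectic: "symplectic T"
    and congruence: "diag2 d = T ** diag2 k ** transpose T + \<epsilon> *\<^sub>R G"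
    and half_integer: "\<And>a. \<exists>m::nat. k $ a = 1/2 + real m"
    and d_ge: "\<And>a. 1/2 \<le> d $ a" and eps_ge: "0 \<le> \<epsilon>" and L_ge: "1 \<le> L"
    and opnorm_T: "opnorm T \<le> 2 * L" and opnorm_k: "opnorm (diag2 k) \<le> L"
    and opnorm_d: "opnorm (diag2 d) \<le> 2 * L^2" and opnorm_G: "opnorm G \<le> 2 * L"
begin

lemma intertwining: "diag2 d ** Omega ** T = T ** diag2 k ** Omega + \<epsilon> *\<^sub>R (G ** Omega ** T)"
  by (rule symplectic_congruence_intertwines[OF symplectic congruence])

lemma opnorm_intertwining_error: "opnorm (G ** Omega ** T) \<le> 4 * L^2"
  using opnorm_mult_le_mult[OF opnorm_mult_le_mult[OF opnorm_G opnorm_Omega_le] opnorm_T]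
  by (simp add: power2_eq_square)

lemma squares_intertwining:
  obtains E where "T ** diag2 (\<chi> a. k $ a ^ 2) - diag2 (\<chi> a. d $ a ^ 2) ** T = \<epsilon> *\<^sub>R E"
    "opnorm E \<le> 12 * L^4"
proof -
  define E where "E = G ** Omega ** T ** diag2 k ** Omega + diag2 d ** Omega ** (G ** Omega ** T)"
  have "T ** diag2 (\<chi> a. k $ a ^ 2) - diag2 (\<chi> a. d $ a ^ 2) ** T = \<epsilon> *\<^sub>R E"
    using intertwining_squares[OF diag2_Omega_commute diag2_Omega_commute intertwining]
    by (simp add: E_def diag2_mult power2_eq_square)
  moreover have "opnorm E \<le> 4 * L^2 * L * 1 + 2 * L^2 * 1 * (4 * L^2)"
    unfolding E_def
    by (intro order_trans[OF opnorm_add_le] add_mono opnorm_mult_le_mult opnorm_intertwining_error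
        opnorm_k opnorm_d opnorm_Omega_le)
  moreover have "4 * L^2 * L * 1 + 2 * L^2 * 1 * (4 * L^2) \<le> 12 * L^4"
    using power_increasing[of 3 4 L] L_ge by (simp add: power_numeral_reduce algebra_simps)
  ultimately show ?thesis using that by force
qed

lemma block_decomposition:
  assumes small: "24 * L^5 * \<epsilon> \<le> 1/2"
  obtains \<nu> where "\<And>a. 1/2 \<le> \<nu> $ a"
    "norm (diag2 d - diag2 \<nu>) \<le> 24 * L^5 * (sqrt (real CARD('n + 'n)) * \<epsilon>)"
    "norm (T - block_part \<nu> k T) \<le> 12 * L^4 * (sqrt (real CARD('n + 'n)) * \<epsilon>)"
proof -
  let ?s = "sqrt (real CARD('n + 'n))"
  obtain E where eq: "T ** diag2 (\<chi> a. k $ a ^ 2) - diag2 (\<chi> a. d $ a ^ 2) ** T = \<epsilon> *\<^sub>R E"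
    and E: "opnorm E \<le> 12 * L^4"
    by (rule squares_intertwining)
  have "\<epsilon> * opnorm E * opnorm T \<le> \<epsilon> * (12 * L^4) * (2 * L)"
    using eps_ge L_ge
    by (intro mult_mono[OF mult_left_mono[OF E eps_ge] opnorm_T] opnorm_nonneg) simp
  also have "\<dots> = 24 * L^5 * \<epsilon>" by (simp add: power_numeral_reduce algebra_simps)
  finally have \<delta>: "\<epsilon> * opnorm E * opnorm T \<le> 24 * L^5 * \<epsilon>" .
  then have "\<epsilon> * opnorm E * opnorm T \<le> 1/2" using small by linarith
  then obtain \<nu> where \<nu>: "\<And>a. \<exists>b. \<nu> $ a = k $ b" "\<And>a. \<bar>d $ a - \<nu> $ a\<bar> \<le> \<epsilon> * opnorm E * opnorm T"
    and gap: "\<And>a b. k $ b \<noteq> \<nu> $ a \<Longrightarrow> 1 \<le> \<bar>k $ b ^ 2 - d $ a ^ 2\<bar>"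
    using half_integer_spectrum_matching[OF half_integer symplectic eq d_ge eps_ge] by blast
  show ?thesis
  proof (rule that)
    show "1/2 \<le> \<nu> $ a" for a
    proof -
      obtain b m where "\<nu> $ a = k $ b" "k $ b = 1/2 + real m" using \<nu>(1)[of a] half_integer by blast
      then show ?thesis by simp
    qed
    have "opnorm (diag2 d - diag2 \<nu>) \<le> 24 * L^5 * \<epsilon>"
      unfolding diag2_diff by (rule opnorm_diag2_le) (simp add: order_trans[OF \<nu>(2) \<delta>])
    then have "norm (diag2 d - diag2 \<nu>) \<le> ?s * (24 * L^5 * \<epsilon>)"
      by (intro order_trans[OF norm_le_sqrt_card_opnorm] mult_left_mono) auto
    then show "norm (diag2 d - diag2 \<nu>) \<le> 24 * L^5 * (?s * \<epsilon>)" by (simp add: mult_ac)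
    have "norm (T - block_part \<nu> k T) \<le> \<epsilon> * norm E"
      by (rule norm_sub_block_part_le[OF eq _ eps_ge]) (simp add: gap)
    also have "\<dots> \<le> \<epsilon> * (?s * (12 * L^4))"
      using eps_ge
      by (intro mult_left_mono order_trans[OF norm_le_sqrt_card_opnorm] mult_left_mono E) auto
    finally show "norm (T - block_part \<nu> k T) \<le> 12 * L^4 * (?s * \<epsilon>)"
      by (simp add: mult_ac)
  qed
qed

lemma commutator_estimate:
  assumes small: "24 * L^5 * \<epsilon> \<le> 1/2" "12 * L^4 * (sqrt (real CARD('n + 'n)) * \<epsilon>) \<le> 1"
  shows "norm (Omega ** T - T ** Omega) \<le> 248 * (L^6 * (sqrt (real CARD('n + 'n)) * \<epsilon>))"
proof -
  let ?s = "sqrt (real CARD('n + 'n))"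
  define x where "x = ?s * \<epsilon>"
  have x: "0 \<le> x" using eps_ge by (simp add: x_def)
  obtain \<nu> where \<nu>: "\<And>a. 1/2 \<le> \<nu> $ a" and KN: "norm (diag2 d - diag2 \<nu>) \<le> 24 * L^5 * x"
    and \<Delta>: "norm (T - block_part \<nu> k T) \<le> 12 * L^4 * x"
    using block_decomposition[OF small(1)] unfolding x_def by blast
  have "opnorm (block_part \<nu> k T) \<le> opnorm T + opnorm (T - block_part \<nu> k T)"
    using opnorm_diff_le[of T "T - block_part \<nu> k T"] by simp
  then have T0: "opnorm (block_part \<nu> k T) \<le> 2 * L + 1"
    using opnorm_T opnorm_le_norm[of "T - block_part \<nu> k T"] \<Delta> small(2) unfolding x_def by linarith
  have "\<epsilon> * norm (G ** Omega ** T) \<le> \<epsilon> * (?s * (4 * L^2))"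
    by (intro mult_left_mono eps_ge order_trans[OF norm_le_sqrt_card_opnorm]
        mult_left_mono[OF opnorm_intertwining_error]) simp
  then have E: "\<epsilon> * norm (G ** Omega ** T) \<le> 4 * L^2 * x" by (simp add: x_def mult_ac)
  have "opnorm (diag2 d) * norm (T - block_part \<nu> k T) \<le> 2 * L^2 * (12 * L^4 * x)"
    and "norm (T - block_part \<nu> k T) * opnorm (diag2 k) \<le> 12 * L^4 * x * L"
    and "norm (diag2 d - diag2 \<nu>) * opnorm (block_part \<nu> k T) \<le> 24 * L^5 * x * (2 * L + 1)"
    using \<Delta> KN T0 x by (intro mult_mono mult_mono' opnorm_d opnorm_k; simp add: opnorm_nonneg)+
  then have "norm (Omega ** T - T ** Omega) \<le> 2 * (4 * L^2 * x + 2 * L^2 * (12 * L^4 * x)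
      + 12 * L^4 * x * L + 24 * L^5 * x * (2 * L + 1)) + 2 * (12 * L^4 * x)"
    using norm_commutator_le_block_part[OF intertwining \<nu> eps_ge] E \<Delta>
    by (smt (verit, del_insts))
  also have "\<dots> \<le> 248 * (L^6 * x)" by (rule commutator_estimate_arith[OF L_ge x])
  finally show ?thesis by (simp add: x_def)
qed

lemma near_orthosymplectic:
  assumes small: "2^15 * L^7 * (sqrt (real CARD('n + 'n)) * \<epsilon>) \<le> 1"
  obtains Q where "symplectic Q" "orthogonal_matrix Q"
    "norm (T - Q) \<le> 11160 * L^8 * (sqrt (real CARD('n + 'n)) * \<epsilon>)"
proof -
  let ?s = "sqrt (real CARD('n + 'n))"
  define x where "x = ?s * \<epsilon>"
  define u where "u = L^6 * x"
  have x: "0 \<le> x" and u: "0 \<le> u" using eps_ge L_ge by (simp_all add: x_def u_def)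
  have Lu: "L * u = L^7 * x" by (simp add: u_def power_numeral_reduce)
  have "1 \<le> ?s" by (rule one_le_sqrt_card)
  then have "\<epsilon> \<le> x" using mult_right_mono[of 1 ?s \<epsilon>] eps_ge by (simp add: x_def)
  then have "L^5 * \<epsilon> \<le> L^5 * x" using L_ge by (intro mult_left_mono) simp_all
  moreover have "L^5 * x \<le> L^7 * x" "L^4 * x \<le> L^7 * x"
    by (rule power_mult_le_power_mult[OF L_ge _ x]; simp)+
  moreover have "32768 * (L^7 * x) \<le> 1" using small by (simp add: x_def mult.assoc)
  ultimately have "24 * (L^5 * \<epsilon>) \<le> 1/2" "12 * (L^4 * x) \<le> 1" by linarith+
  then have "24 * L^5 * \<epsilon> \<le> 1/2" "12 * L^4 * (?s * \<epsilon>) \<le> 1"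
    unfolding x_def by (simp_all only: mult.assoc)
  then have "norm (Omega ** T - T ** Omega) \<le> 248 * u"
    unfolding u_def x_def by (rule commutator_estimate)
  moreover have "32 * (2 * L + 1) * (248 * u) \<le> 1"
  proof -
    have "32 * (2 * L + 1) * (248 * u) \<le> 32 * (3 * L) * (248 * u)"
      using L_ge u by (intro mult_right_mono) auto
    also have "\<dots> = 23808 * (L * u)" by simp
    also have "\<dots> \<le> 2^15 * (L * u)" using L_ge u by simp
    also have "\<dots> \<le> 1" using small by (simp add: Lu x_def mult.assoc)
    finally show ?thesis .
  qed
  ultimately obtain Q where Q: "symplectic Q" "orthogonal_matrix Q"
    "norm (T - Q) \<le> 5 * (2 * L + 1)^2 * (248 * u)"
    using symplectic_near_orthosymplectic[OF symplectic opnorm_T] by blast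
  have "5 * (2 * L + 1)^2 * (248 * u) \<le> 5 * (3 * L)^2 * (248 * u)"
    using L_ge u by (intro mult_right_mono mult_left_mono power_mono) auto
  also have "\<dots> = 11160 * L^8 * x" by (simp add: u_def power_numeral_reduce)
  finally show ?thesis using that[OF Q(1,2)] order_trans[OF Q(3)] unfolding x_def by blast
qed

lemma distance_to_orthosymplectic:
  assumes L: "L = a^8 * q^2" and a: "1 \<le> a" and q: "1 \<le> q" and m: "1 \<le> m"
    and n: "real CARD('n) = m^2" and \<beta>: "0 \<le> \<beta>" "\<epsilon> = \<beta>^8" and T: "opnorm T \<le> 2 * a^8 * q"
  obtains Q where "symplectic Q" "orthogonal_matrix Q"
    "opnorm (T - Q) \<le> 3 * a^8 * q * (8 * \<beta> * a^13 * m^3 * q^2)"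
proof (cases "8 * \<beta> * a^13 * m^3 * q^2 < 1")
  case True
  have s: "sqrt (real CARD('n + 'n)) = sqrt 2 * m" using n m by (simp add: real_sqrt_mult)
  obtain Q where Q: "symplectic Q" "orthogonal_matrix Q"
    "norm (T - Q) \<le> 11160 * L^8 * (sqrt (real CARD('n + 'n)) * \<epsilon>)"
    using near_orthosymplectic small_regime_smallness[OF a m q \<beta>(1) True]
    unfolding L s \<beta>(2) by blast
  have "opnorm (T - Q) \<le> 3 * a^8 * q * (8 * \<beta> * a^13 * m^3 * q^2)"
    using order_trans[OF opnorm_le_norm Q(3)] small_regime_bound[OF a m q \<beta>(1) True]
    unfolding L s \<beta>(2) by linarith
  then show ?thesis using that Q(1,2) by blast
next
  case False
  have "1 \<le> a^8 * q" using mult_mono[OF one_le_power[OF a, of 8] q] by simp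
  then have "opnorm (T - mat 1) \<le> 3 * a^8 * q * 1"
    using opnorm_diff_le[of T "mat 1"] T by (simp add: opnorm_mat_1)
  also have "\<dots> \<le> 3 * a^8 * q * (8 * \<beta> * a^13 * m^3 * q^2)"
    using False a q by (intro mult_left_mono) auto
  finally show ?thesis using that symplectic_mat_1 orthogonal_matrix_id by blast
qed

end

section \<open>Covariance matrices\<close>

lemma valid_cov_williamson_ge_half:
  assumes "valid_cov M" "symplectic R" "\<forall>i. D $ i > 0" "M = R ** diag2 D ** transpose R"
  shows "1/2 \<le> D $ a"
proof -
  have "D $ a \<in> symplectic_eigenvalues M"
    unfolding symplectic_eigenvalues_def using assms(2-4) by blast
  then show ?thesis using assms(1) by (simp add: valid_cov_def)
qed

lemma quadratic_form_diag2_ge: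
  assumes "\<And>a. c \<le> D $ a"
  shows "c * norm y ^ 2 \<le> inner y (diag2 D *v (y::real^('n::finite + 'n)))"
proof -
  have "c * norm y ^ 2 = (\<Sum>i\<in>UNIV. c * (y $ i)^2)" by (simp add: norm_vec_power2 sum_distrib_left)
  also have "\<dots> \<le> (\<Sum>i\<in>UNIV. y $ i * (D $ mode i * y $ i))"
    using assms
    by (intro sum_mono) (simp add: power2_eq_square mult_right_mono mult.left_commute[of "y $ _"])
  also have "\<dots> = inner y (diag2 D *v y)" by (simp add: diag2_mult_vec inner_vec_def)
  finally show ?thesis .
qed

lemma opnorm_power2_le_congruence:
  fixes R :: "real^('n::finite + 'n)^('n + 'n)"
  assumes "\<And>a. c \<le> D $ a" "0 < c"
  shows "c * opnorm R ^ 2 \<le> opnorm (R ** diag2 D ** transpose R)"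
proof -
  let ?M = "R ** diag2 D ** transpose R"
  have "opnorm (transpose R) \<le> sqrt (opnorm ?M / c)"
  proof (rule opnorm_leI)
    fix x :: "real^('n + 'n)"
    let ?y = "transpose R *v x"
    have "c * norm ?y ^ 2 \<le> inner ?y (diag2 D *v ?y)" by (rule quadratic_form_diag2_ge[OF assms(1)])
    also have "\<dots> = inner x (?M *v x)"
      by (metis dot_lmul_matrix transpose_matrix_vector matrix_vector_mul_assoc)
    also have "\<dots> \<le> norm x * (opnorm ?M * norm x)"
      by (rule order_trans[OF norm_cauchy_schwarz
            mult_left_mono[OF opnorm_mult_vec_le norm_ge_zero]])
    finally have "norm ?y ^ 2 \<le> (opnorm ?M / c) * norm x ^ 2"
      using assms(2) by (simp add: field_simps power2_eq_square)
    then show "norm ?y \<le> sqrt (opnorm ?M / c) * norm x"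
      by (metis real_sqrt_le_mono real_sqrt_mult real_sqrt_abs abs_norm_cancel power2_eq_square
          real_sqrt_mult_self)
  qed
  then have "opnorm R ^ 2 \<le> (sqrt (opnorm ?M / c)) ^ 2"
    by (intro power_mono) (simp_all add: opnorm_transpose opnorm_nonneg)
  then show ?thesis using assms(2) opnorm_nonneg[of ?M] by (simp add: field_simps)
qed

lemma opnorm_perturbed_covariance_le:
  fixes S F :: "real^'n^'n" and K :: "real^'n^'n"
  assumes "1 \<le> opnorm S" "0 \<le> \<epsilon>" "opnorm F \<le> 1" "opnorm K + \<epsilon> \<le> \<phi>"
  shows "opnorm (S ** K ** transpose S + \<epsilon> *\<^sub>R F) \<le> opnorm S ^ 2 * \<phi>"
proof -
  have "opnorm (S ** K ** transpose S + \<epsilon> *\<^sub>R F) \<le> opnorm S * opnorm K * opnorm S + \<epsilon> * 1"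
    using assms(2,3)
    by (intro order_trans[OF opnorm_add_le] add_mono opnorm_mult_le_mult order_refl)
      (simp_all add: opnorm_transpose opnorm_scaleR mult_left_le)
  also have "\<dots> \<le> opnorm S ^ 2 * (opnorm K + \<epsilon>)"
    using assms(1,2) mult_right_mono[of 1 "opnorm S ^ 2" \<epsilon>] one_le_power[OF assms(1), of 2]
    by (simp add: power2_eq_square algebra_simps)
  also have "\<dots> \<le> opnorm S ^ 2 * \<phi>" using assms(4) by (simp add: mult_left_mono)
  finally show ?thesis .
qed

lemma congruence_cancel:
  fixes R :: "real^'n^'n"
  assumes "matrix_inv R ** R = mat 1"
  shows "D = matrix_inv R ** (R ** D ** transpose R) ** transpose (matrix_inv R)"
proof -
  have "transpose R ** transpose (matrix_inv R) = mat 1"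
    using assms by (metis matrix_transpose_mul transpose_mat)
  then show ?thesis using assms by (metis matrix_mul_assoc matrix_mul_lid matrix_mul_rid)
qed

lemma congruence_by_inverse:
  fixes R :: "real^'n^'n"
  assumes "matrix_inv R ** R = mat 1"
    and "S ** K ** transpose S + \<epsilon> *\<^sub>R F = R ** D ** transpose R"
  shows "D = (matrix_inv R ** S) ** K ** transpose (matrix_inv R ** S)
    + \<epsilon> *\<^sub>R (matrix_inv R ** F ** transpose (matrix_inv R))"
  by (subst congruence_cancel[OF assms(1)])
    (simp add: assms(2)[symmetric] matrix_algebra_simps matrix_transpose_mul)

lemma opnorm_power2_williamson_factor_le:
  assumes "valid_cov M" "symplectic R" "\<forall>i. D $ i > 0" "M = R ** diag2 D ** transpose R"
  shows "opnorm R ^ 2 \<le> 2 * opnorm M"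
  using opnorm_power2_le_congruence[of "1/2" D R] valid_cov_williamson_ge_half[OF assms] assms(4)
  by simp

lemma perturbed_normal_form_of_covariance:
  fixes S R' F :: "real^('n::finite + 'n)^('n + 'n)" and k D' :: "real^'n" and \<epsilon> \<phi> :: real
  defines "L \<equiv> opnorm S ^ 2 * \<phi>"
  assumes S: "symplectic S" and R': "symplectic R'" and D': "\<forall>i. D' $ i > 0"
    and valid: "valid_cov (S ** diag2 k ** transpose S + \<epsilon> *\<^sub>R F)"
    and eq: "S ** diag2 k ** transpose S + \<epsilon> *\<^sub>R F = R' ** diag2 D' ** transpose R'"
    and k: "\<And>a. \<exists>m::nat. k $ a = 1/2 + real m" and \<epsilon>: "0 \<le> \<epsilon>" and F: "opnorm F \<le> 1"
    and \<phi>: "1 \<le> \<phi>" "opnorm (diag2 k) + \<epsilon> \<le> \<phi>"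
  shows "perturbed_normal_form (matrix_inv R' ** S)
      (matrix_inv R' ** F ** transpose (matrix_inv R')) k D' \<epsilon> L"
    and "opnorm (matrix_inv R' ** S) \<le> 2 * opnorm S ^ 2 * sqrt \<phi>"
proof -
  let ?R = "matrix_inv R'"
  have S1: "1 \<le> opnorm S" by (rule opnorm_symplectic_ge_1[OF S])
  then have S2: "1 \<le> opnorm S ^ 2" by (simp add: one_le_power)
  then have L: "1 \<le> L" "\<phi> \<le> L" using mult_mono[OF S2 \<phi>(1)] mult_right_mono[OF S2, of \<phi>] \<phi>(1)
    by (simp_all add: L_def)
  have M: "opnorm (S ** diag2 k ** transpose S + \<epsilon> *\<^sub>R F) \<le> L"
    unfolding L_def by (rule opnorm_perturbed_covariance_le[OF S1 \<epsilon> F \<phi>(2)])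
  have "opnorm ?R ^ 2 \<le> 2 * L"
    using power_mono[OF opnorm_symplectic_matrix_inv_le[OF R'] opnorm_nonneg, of 2]
      opnorm_power2_williamson_factor_le[OF valid R' D' eq] M by linarith
  then have R: "opnorm ?R \<le> sqrt (2 * L)" by (rule real_le_rsqrt)
  have R2: "opnorm ?R * opnorm ?R \<le> 2 * L" using mult_mono[OF R R _ opnorm_nonneg] L(1) by simp
  have "opnorm (?R ** S) \<le> sqrt (2 * L) * opnorm S" by (rule opnorm_mult_le_mult[OF R order_refl])
  also have "\<dots> = sqrt 2 * (opnorm S ^ 2 * sqrt \<phi>)"
    using opnorm_nonneg[of S] by (simp add: L_def real_sqrt_mult power2_eq_square)
  also have "\<dots> \<le> 2 * (opnorm S ^ 2 * sqrt \<phi>)"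
    using sqrt2_less_2 \<phi>(1) by (intro mult_right_mono) auto
  finally show T: "opnorm (?R ** S) \<le> 2 * opnorm S ^ 2 * sqrt \<phi>" by (simp only: mult.assoc)
  show "perturbed_normal_form (?R ** S) (?R ** F ** transpose ?R) k D' \<epsilon> L"
  proof
    show "symplectic (?R ** S)" by (intro symplectic_mult symplectic_matrix_inv R' S)
    show "diag2 D' = (?R ** S) ** diag2 k ** transpose (?R ** S) + \<epsilon> *\<^sub>R (?R ** F ** transpose ?R)"
      by (rule congruence_by_inverse[OF symplectic_matrix_inv_left[OF R'] eq])
    have "sqrt \<phi> * 1 \<le> sqrt \<phi> * sqrt \<phi>" using \<phi>(1) by (intro mult_left_mono) auto
    then have "2 * opnorm S ^ 2 * sqrt \<phi> \<le> 2 * opnorm S ^ 2 * \<phi>"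
      using \<phi>(1) by (intro mult_left_mono) simp_all
    then show "opnorm (?R ** S) \<le> 2 * L" using T by (simp add: L_def)
    show "opnorm (diag2 k) \<le> L" using \<phi>(2) \<epsilon> L(2) by linarith
    have "opnorm (diag2 D') = opnorm (?R ** (R' ** diag2 D' ** transpose R') ** transpose ?R)"
      by (rule arg_cong[OF congruence_cancel[OF symplectic_matrix_inv_left[OF R']]])
    also have "\<dots> \<le> opnorm ?R * L * opnorm ?R"
      using M by (intro opnorm_mult_le_mult) (simp_all add: eq opnorm_transpose)
    also have "\<dots> \<le> 2 * L * L" using R2 L(1) by (simp add: mult_ac mult_right_mono)
    finally show "opnorm (diag2 D') \<le> 2 * L^2" by (simp add: power2_eq_square mult_ac)
    show "opnorm (?R ** F ** transpose ?R) \<le> 2 * L"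
      using opnorm_mult_le_mult[OF opnorm_mult_le_mult[OF order_refl F] order_refl,
          of ?R "transpose ?R"] R2
      by (simp add: opnorm_transpose)
    show "1/2 \<le> D' $ a" for a by (rule valid_cov_williamson_ge_half[OF valid R' D' eq])
  qed (use k \<epsilon> L(1) in auto)
qed

lemma target_bound_eq:
  fixes \<epsilon> s n \<phi> :: real
  assumes "0 \<le> \<epsilon>" "0 < n" "0 < \<phi>"
  shows "24 * \<epsilon> powr (1/8) * exp (21 * s / 4) * n powr (3/2) * \<phi> powr (3/2)
    = 3 * exp (s/4)^8 * sqrt \<phi> * (8 * \<epsilon> powr (1/8) * exp (s/4)^13 * sqrt n^3 * sqrt \<phi>^2)"
proof -
  have "exp (21 * s / 4) = exp (s/4)^21" by (simp add: exp_of_nat_mult[symmetric])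
  moreover have "x powr (3/2) = sqrt x ^ 3" if "0 < x" for x :: real
  proof -
    have "x powr (3/2) = (x powr (1/2)) powr 3" by (simp add: powr_powr)
    then show ?thesis using that by (simp add: powr_half_sqrt powr_realpow)
  qed
  moreover have "sqrt \<phi> ^ 3 = \<phi> * sqrt \<phi>" using assms(3) by (simp add: power3_eq_cube)
  ultimately show ?thesis using assms by (simp add: power_add[symmetric] mult_ac)
qed

theorem mainTheorem9:
  fixes S R' F :: "real^('n::finite + 'n)^('n + 'n)"
    and f :: "'n \<Rightarrow> nat" and s \<epsilon> :: real and D' :: "real^'n"
  assumes "symplectic S"
    and "opnorm S = exp s"
    and "0 \<le> \<epsilon>" and "\<epsilon> < 1/4"
    and "symmetric_mat F" and "opnorm F \<le> 1"
    and "valid_cov (S ** diag2 (\<chi> i. 1/2 + real (f i)) ** transpose S + \<epsilon> *\<^sub>R F)"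
    and "symplectic R'"
    and "\<forall>i. D' $ i > 0"
    and "S ** diag2 (\<chi> i. 1/2 + real (f i)) ** transpose S + \<epsilon> *\<^sub>R F
           = R' ** diag2 D' ** transpose R'"
  shows "\<exists>Q. symplectic Q \<and> orthogonal_matrix Q \<and>
           opnorm (matrix_inv R' ** S - Q)
             \<le> 24 * \<epsilon> powr (1/8) * exp (21 * s / 4) * real CARD('n) powr (3/2)
                * (1 + real (Max (range f))) powr (3/2)"
proof -
  define \<phi> where "\<phi> = 1 + real (Max (range f))"
  \<comment> \<open>Only the operator norm of F enters.\<close>
  \<comment> \<open>In the variables a, m, q and \<beta> = \<epsilon> powr (1/8) all exponents of the bound are integers.\<close>
  define a m q where "a = exp (s/4)" and "m = sqrt (real CARD('n))" and "q = sqrt \<phi>"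
  have \<phi>: "1 \<le> \<phi>" "opnorm (diag2 (\<chi> i. 1/2 + real (f i))) + \<epsilon> \<le> \<phi>"
    using opnorm_diag2_le[of "\<chi> i. 1/2 + real (f i)" "\<phi> - 1/2"] assms(4) by (simp_all add: \<phi>_def)
  have S: "opnorm S ^ 2 = a^8" using assms(2) by (simp add: a_def exp_of_nat_mult[symmetric])
  note normal_form = perturbed_normal_form_of_covariance[OF assms(1,8,9,7,10) _ assms(3,6) \<phi>]
  have T: "opnorm (matrix_inv R' ** S) \<le> 2 * a^8 * q"
    using normal_form(2) by (simp add: S q_def)
  have "1 \<le> exp s" using opnorm_symplectic_ge_1[OF assms(1)] assms(2) by simp
  then have a: "1 \<le> a" by (simp add: a_def)
  have \<epsilon>: "\<epsilon> = (\<epsilon> powr (1/8))^8"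
    using assms(3) by (simp add: powr_numeral[symmetric] powr_powr)
  obtain Q where "symplectic Q" "orthogonal_matrix Q"
    "opnorm (matrix_inv R' ** S - Q) \<le> 3 * a^8 * q * (8 * \<epsilon> powr (1/8) * a^13 * m^3 * q^2)"
    using perturbed_normal_form.distance_to_orthosymplectic[OF normal_form(1) _ a _
        one_le_sqrt_card[where 'a = 'n, folded m_def] _ _ \<epsilon> T]
      \<phi>(1) by (simp add: S q_def m_def) blast
  moreover have "0 < real CARD('n)" "0 < \<phi>" using \<phi>(1) by simp_all
  ultimately show ?thesis
    unfolding \<phi>_def[symmetric] target_bound_eq[OF assms(3) \<open>0 < real CARD('n)\<close> \<open>0 < \<phi>\<close>]
      a_def[symmetric] m_def[symmetric] q_def[symmetric] by blast
qed

end
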